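(* Let $\{\mathcal N,\gamma,\boldsymbol\ell,\ell^{(2)}\}$ be null metric hypersurface data. Then $${\stackrel{\circ}{R}}_{ab}n^a=\pounds_ns_b-2P^{af}U_{ab}s_f+P^{cf}{\stackrel{\circ}{\nabla}}_cU_{bf}-{\stackrel{\circ}{\nabla}}_b(\mathrm{tr}_P\mathbf U)+(\mathrm{tr}_P\mathbf U)s_b,$$ $${\stackrel{\circ}{R}}_{(ab)}n^a=\tfrac12\pounds_ns_b-2P^{af}U_{ab}s_f+P^{cf}{\stackrel{\circ}{\nabla}}_cU_{bf}-{\stackrel{\circ}{\nabla}}_b(\mathrm{tr}_P\mathbf U)+(\mathrm{tr}_P\mathbf U)s_b,$$ $${\stackrel{\circ}{R}}_{ab}n^an^b=-P^{ab}P^{cd}U_{ac}U_{bd}-n(\mathrm{tr}_P\mathbf U).$$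
   Context: Metric hypersurface data $\{\mathcal N,\gamma,\boldsymbol\ell,\ell^{(2)}\}$: $\mathcal N$ smooth $\mathfrak n$-manifold, $\gamma$ symmetric $2$-covariant, $\boldsymbol\ell$ a one-form, $\ell^{(2)}$ a function, such that $\boldsymbol{\mathcal A}|_p((W,a),(Z,b))=\gamma(W,Z)+a\boldsymbol\ell(Z)+b\boldsymbol\ell(W)+ab\ell^{(2)}$ is non-degenerate; its inverse $\mathcal A((\boldsymbol\alpha,a),(\boldsymbol\beta,b))=P(\boldsymbol\alpha,\boldsymbol\beta)+a\,n(\boldsymbol\beta)+b\,n(\boldsymbol\alpha)+ab\,n^{(2)}$ defines $P,n,n^{(2)}$ with $\gamma_{ab}n^b+n^{(2)}\ell_a=0$, $\ell_an^a+n^{(2)}\ell^{(2)}=1$, $P^{ab}\ell_b+\ell^{(2)}n^a=0$, $P^{ab}\gamma_{bc}+n^a\ell_c=\delta^a_c$. Null: $n^{(2)}=0$. $\mathbf F=\frac12d\boldsymbol\ell$, $s_b=n^aF_{ab}$, $\mathbf U=\frac12\pounds_n\gamma$, $\mathrm{tr}_P\mathbf U=P^{ab}U_{ab}$. ${\stackrel{\circ}{\nabla}}$ is the unique torsion-free connection with $({\stackrel{\circ}{\nabla}}_X\gamma)(Z,W)=-\mathbf U(X,Z)\boldsymbol\ell(W)-\mathbf U(X,W)\boldsymbol\ell(Z)$, $({\stackrel{\circ}{\nabla}}_X\boldsymbol\ell)(Z)+({\stackrel{\circ}{\nabla}}_Z\boldsymbol\ell)(X)=-2\ell^{(2)}\mathbf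 U(X,Z)$; curvature convention $R(X,W)Z=(\nabla_X\nabla_W-\nabla_W\nabla_X-\nabla_{[X,W]})Z$, $R^a{}_{bcd}\leftrightarrow\alpha_aZ^bX^cW^d$, Ricci ${\stackrel{\circ}{R}}_{bd}={\stackrel{\circ}{R}}{}^a{}_{bad}$. Parentheses: symmetrization with weight $1/2$. *)

theory Defs
  imports "HOL-Analysis.Analysis"
begin

text \<open>The manifold N is represented by a coordinate
chart: an open set S of real^'n, where CARD('n) is the dimension of N.
Tensor fields are given by their components, functions S -> real.
Index conventions: g a b = gamma_ab, l a = ell_a, l2 = ell^(2),
Gam a b c = Christoffel symbol Gamma^a_bc with nabla_b (d_c) = Gamma^a_bc d_a.\<close>

definition pd :: "'n::finite \<Rightarrow> (real^'n \<Rightarrow> real) \<Rightarrow> real^'n \<Rightarrow> real" where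
  "pd i f = (\<lambda>x. frechet_derivative f (at x) (axis i 1))"

definition smooth_on :: "(real^'n::finite) set \<Rightarrow> (real^'n \<Rightarrow> real) \<Rightarrow> bool" where
  "smooth_on S f \<longleftrightarrow> (\<forall>is. (foldr pd is f) differentiable_on S)"

text \<open>The matrix of the bilinear form boldA on T_pN x R (index None = the R slot).\<close>
definition Amat :: "('n::finite \<Rightarrow> 'n \<Rightarrow> real^'n \<Rightarrow> real) \<Rightarrow> ('n \<Rightarrow> real^'n \<Rightarrow> real)
     \<Rightarrow> (real^'n \<Rightarrow> real) \<Rightarrow> real^'n \<Rightarrow> real^('n option)^('n option)" where
  "Amat g l l2 x = (\<chi> i j. (case (i, j) of
       (Some a, Some b) \<Rightarrow> g a b x
     | (Some a, None) \<Rightarrow> l a x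
     | (None, Some b) \<Rightarrow> l b x
     | (None, None) \<Rightarrow> l2 x))"

definition metric_hypersurface_data where
  "metric_hypersurface_data S g l l2 \<longleftrightarrow> open S
     \<and> (\<forall>a b x. g a b x = g b a x)
     \<and> (\<forall>a b. smooth_on S (g a b)) \<and> (\<forall>a. smooth_on S (l a)) \<and> smooth_on S l2
     \<and> (\<forall>x\<in>S. invertible (Amat g l l2 x))"

text \<open>Components of the inverse form calA: P^ab, n^a, n^(2).\<close>
definition Pm where "Pm g l l2 a b x = matrix_inv (Amat g l l2 x) $ Some a $ Some b"
definition nv where "nv g l l2 a x = matrix_inv (Amat g l l2 x) $ Some a $ None"
definition n2 where "n2 g l l2 x = matrix_inv (Amat g l l2 x) $ None $ None"

definition null_data where
  "null_data S g l l2 \<longleftrightarrow> metric_hypersurface_data S g l l2 \<and> (\<forall>x\<in>S. n2 g l l2 x = 0)"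

text \<open>F = 1/2 d ell, s_b = n^a F_ab, U = 1/2 Lie_n gamma, tr_P U.\<close>
definition Fm where "Fm l a b x = (pd a (l b) x - pd b (l a) x) / 2"
definition sv where "sv g l l2 b x = (\<Sum>a\<in>UNIV. nv g l l2 a x * Fm l a b x)"
definition Uf where "Uf g l l2 a b x = (\<Sum>c\<in>UNIV. nv g l l2 c x * pd c (g a b) x
      + g c b x * pd a (nv g l l2 c) x + g a c x * pd b (nv g l l2 c) x) / 2"
definition trPU where "trPU g l l2 x = (\<Sum>a\<in>UNIV. \<Sum>b\<in>UNIV. Pm g l l2 a b x * Uf g l l2 a b x)"

definition lie_n_s where "lie_n_s g l l2 b x = (\<Sum>c\<in>UNIV. nv g l l2 c x * pd c (sv g l l2 b) x
      + sv g l l2 c x * pd b (nv g l l2 c) x)"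

definition ring_connection where
  "ring_connection S g l l2 Gam \<longleftrightarrow>
     (\<forall>a b c. smooth_on S (Gam a b c)) \<and>
     (\<forall>x\<in>S. \<forall>a b c. Gam a b c x = Gam a c b x) \<and>
     (\<forall>x\<in>S. \<forall>c a b. pd c (g a b) x - (\<Sum>d\<in>UNIV. Gam d c a x * g d b x + Gam d c b x * g a d x)
              = - Uf g l l2 c a x * l b x - Uf g l l2 c b x * l a x) \<and>
     (\<forall>x\<in>S. \<forall>c a. (pd c (l a) x - (\<Sum>d\<in>UNIV. Gam d c a x * l d x))
                 + (pd a (l c) x - (\<Sum>d\<in>UNIV. Gam d a c x * l d x))
              = - 2 * l2 x * Uf g l l2 c a x)"

definition nablaU where "nablaU g l l2 Gam c b f x = pd c (Uf g l l2 b f) x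
     - (\<Sum>d\<in>UNIV. Gam d c b x * Uf g l l2 d f x + Gam d c f x * Uf g l l2 b d x)"

text \<open>Riemann tensor R^a_bcd with R^a_bcd Z^b = (nabla_c nabla_d - nabla_d nabla_c) Z^a, Ricci R_bd = R^a_bad.\<close>
definition Riem where "Riem Gam a b c d x = pd c (Gam a d b) x - pd d (Gam a c b) x
     + (\<Sum>e\<in>UNIV. Gam a c e x * Gam e d b x - Gam a d e x * Gam e c b x)"
definition Ric where "Ric Gam b d x = (\<Sum>a\<in>UNIV. Riem Gam a b a d x)"

end

theory Submission
  imports Defs
begin

(* In the chart, the inverse of the matrix A built from gamma, ell and ell2 has the blocks
   P, n and n2 = 0, and the connection is recovered from P and n by a Koszul formula corrected
   by U. Two consequences carry the argument: nabla_b n^c = s_b n^c + P^cf U_bf and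
   nabla_c P^cf = - P^fe s_e - n^f n(ell2). Feeding the first into the contracted Ricci identity
   R_ab n^a = nabla_c nabla_b n^c - nabla_b nabla_c n^c, and using the second together with
   nabla_c n^c = tr_P U and U(n, .) = s(n) = 0, gives the formula for R_ab n^a. The trace
   Gamma^c_cb equals s_b + d_b log |det A| / 2, so the antisymmetric part of the Ricci tensor is
   ds, whose contraction with n is Lie_n s; this gives the symmetrized formula. Contracting the
   first formula with n^b gives the third. *)

lemma pd_eq_derivative: "(f has_derivative f') (at x) \<Longrightarrow> pd i f x = f' (axis i 1)"
  unfolding pd_def using frechet_derivative_at by metis

lemma pd_cong_open:
  assumes "open S" "x \<in> S" "\<forall>y\<in>S. f y = g y"
  shows "pd i f x = pd i g x"
proof -
  have "(f has_derivative f') (at x) \<longleftrightarrow> (g has_derivative f') (at x)" for f'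
    using has_derivative_transform_within_open[OF _ assms(1,2)] assms(3) by metis
  then show ?thesis unfolding pd_def frechet_derivative_def by simp
qed

lemma pd_eq_0_if_constant_on:
  assumes "open S" "x \<in> S" "\<And>y. y \<in> S \<Longrightarrow> f y = c"
  shows "pd i f x = 0"
  using pd_cong_open[OF assms(1,2), of f "\<lambda>y. c" i] assms(3) by (simp add: pd_def)

lemma pd_const: "pd i (\<lambda>y. c) x = 0"
  by (simp add: pd_def)

lemma pd_add:
  assumes "f differentiable at x" "g differentiable at x"
  shows "pd i (\<lambda>y. f y + g y) x = pd i f x + pd i g x"
  using pd_eq_derivative[OF has_derivative_add[OF assms[THEN frechet_derivative_works[THEN iffD1]]]]
  by (simp add: pd_def)

lemma pd_diff:
  assumes "f differentiable at x" "g differentiable at x"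
  shows "pd i (\<lambda>y. f y - g y) x = pd i f x - pd i g x"
  using pd_eq_derivative[OF has_derivative_diff[OF assms[THEN frechet_derivative_works[THEN iffD1]]]]
  by (simp add: pd_def)

lemma pd_mult:
  assumes "f differentiable at x" "g differentiable at x"
  shows "pd i (\<lambda>y. f y * g y) x = pd i f x * g x + f x * pd i g x"
  using pd_eq_derivative[OF has_derivative_mult[OF assms[THEN frechet_derivative_works[THEN iffD1]]]]
  by (simp add: pd_def)

lemma pd_divide_const:
  assumes "f differentiable at x"
  shows "pd i (\<lambda>y. f y / c) x = pd i f x / c"
  using pd_mult[OF assms differentiable_const, of i "inverse c"]
  by (simp add: divide_inverse pd_const)

lemma pd_inverse:
  assumes "f differentiable at x" "f x \<noteq> 0"
  shows "pd i (\<lambda>y. inverse (f y)) x = - (pd i f x * inverse (f x) * inverse (f x))"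
  using pd_eq_derivative[OF Deriv.has_derivative_inverse[of f x, OF assms(2)
        assms(1)[THEN frechet_derivative_works[THEN iffD1]]]]
  by (simp add: pd_def)

lemma pd_sum:
  assumes "finite A" "\<And>a. a \<in> A \<Longrightarrow> f a differentiable at x"
  shows "pd i (\<lambda>y. \<Sum>a\<in>A. f a y) x = (\<Sum>a\<in>A. pd i (f a) x)"
proof -
  have "((\<lambda>y. \<Sum>a\<in>A. f a y) has_derivative (\<lambda>h. \<Sum>a\<in>A. frechet_derivative (f a) (at x) h)) (at x)"
    using assms by (intro has_derivative_sum) (auto simp: frechet_derivative_works)
  from pd_eq_derivative[OF this] show ?thesis by (simp add: pd_def)
qed

lemma pd_sum_UNIV:
  fixes f :: "'a::finite \<Rightarrow> real^'n::finite \<Rightarrow> real"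
  assumes "\<And>a. f a differentiable at x"
  shows "pd i (\<lambda>y. \<Sum>a\<in>UNIV. f a y) x = (\<Sum>a\<in>UNIV. pd i (f a) x)"
  using pd_sum[of UNIV f x i] assms by simp

definition Ck_on :: "(real^'n::finite) set \<Rightarrow> nat \<Rightarrow> (real^'n \<Rightarrow> real) \<Rightarrow> bool" where
  "Ck_on S k f \<longleftrightarrow> (\<forall>is. length is \<le> k \<longrightarrow> foldr pd is f differentiable_on S)"

lemma smooth_on_iff_Ck_on: "smooth_on S f \<longleftrightarrow> (\<forall>k. Ck_on S k f)"
  unfolding smooth_on_def Ck_on_def by auto

lemma Ck_on_0: "Ck_on S 0 f \<longleftrightarrow> f differentiable_on S"
  unfolding Ck_on_def by auto

lemma Ck_on_Suc: "Ck_on S (Suc k) f \<longleftrightarrow> f differentiable_on S \<and> (\<forall>i. Ck_on S k (pd i f))"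
proof
  assume f: "Ck_on S (Suc k) f"
  have "foldr pd is (pd i f) differentiable_on S" if "length is \<le> k" for i "is"
  proof -
    have "length (is @ [i]) \<le> Suc k" using that by simp
    then have "foldr pd (is @ [i]) f differentiable_on S"
      using f unfolding Ck_on_def by blast
    then show ?thesis by simp
  qed
  moreover have "f differentiable_on S"
    using f unfolding Ck_on_def by (metis foldr_Nil id_apply le0 list.size(3))
  ultimately show "f differentiable_on S \<and> (\<forall>i. Ck_on S k (pd i f))"
    unfolding Ck_on_def by blast
next
  assume f: "f differentiable_on S \<and> (\<forall>i. Ck_on S k (pd i f))"
  show "Ck_on S (Suc k) f"
    unfolding Ck_on_def
  proof (intro allI impI)
    fix "is" :: "'a list"
    assume "length is \<le> Suc k"
    then show "foldr pd is f differentiable_on S"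
      using f by (cases "is" rule: rev_cases) (auto simp: Ck_on_def)
  qed
qed

lemma Ck_on_Suc_imp_Ck_on: "Ck_on S (Suc k) f \<Longrightarrow> Ck_on S k f"
  unfolding Ck_on_def by auto

lemma Ck_on_imp_differentiable_at: "Ck_on S k f \<Longrightarrow> open S \<Longrightarrow> x \<in> S \<Longrightarrow> f differentiable at x"
  unfolding Ck_on_def
  by (metis differentiable_on_eq_differentiable_at foldr_Nil id_apply le0 list.size(3))

lemma differentiable_on_cong_open:
  assumes "open S" "\<forall>y\<in>S. f y = g y" "f differentiable_on S"
  shows "g differentiable_on S"
  using assms has_derivative_transform_within_open
  unfolding differentiable_on_eq_differentiable_at[OF assms(1)] differentiable_def
  by metis

lemma Ck_on_cong_open:
  assumes "open S" "\<forall>y\<in>S. f y = g y" "Ck_on S k f"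
  shows "Ck_on S k g"
  using assms(2,3)
proof (induction k arbitrary: f g)
  case 0
  then show ?case using differentiable_on_cong_open[OF assms(1)] unfolding Ck_on_0 by blast
next
  case (Suc k)
  have "\<forall>y\<in>S. pd i f y = pd i g y" for i
    using pd_cong_open[OF assms(1) _ Suc.prems(1)] by blast
  with Suc show ?case
    using differentiable_on_cong_open[OF assms(1)] unfolding Ck_on_Suc by blast
qed

lemma Ck_on_const: "Ck_on S k (\<lambda>y. c)"
proof (induction k arbitrary: c)
  case 0
  then show ?case by (simp add: Ck_on_0)
next
  case (Suc k)
  then show ?case by (simp add: Ck_on_Suc pd_const[abs_def])
qed

lemma Ck_on_add:
  assumes "open S" "Ck_on S k f" "Ck_on S k g"
  shows "Ck_on S k (\<lambda>y. f y + g y)"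
  using assms(2,3)
proof (induction k arbitrary: f g)
  case 0
  then show ?case unfolding Ck_on_0 by (rule differentiable_on_add)
next
  case (Suc k)
  have "Ck_on S k (pd i (\<lambda>y. f y + g y))" for i
  proof (rule Ck_on_cong_open[OF assms(1)])
    show "\<forall>y\<in>S. pd i f y + pd i g y = pd i (\<lambda>y. f y + g y) y"
      using Suc.prems assms(1) by (simp add: pd_add Ck_on_imp_differentiable_at)
    show "Ck_on S k (\<lambda>y. pd i f y + pd i g y)"
      using Suc by (simp add: Ck_on_Suc)
  qed
  with Suc.prems show ?case
    unfolding Ck_on_Suc by (blast intro: differentiable_on_add)
qed

lemma Ck_on_mult:
  assumes "open S" "Ck_on S k f" "Ck_on S k g"
  shows "Ck_on S k (\<lambda>y. f y * g y)"
  using assms(2,3)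
proof (induction k arbitrary: f g)
  case 0
  then show ?case unfolding Ck_on_0 by (rule differentiable_on_mult)
next
  case (Suc k)
  have "Ck_on S k (pd i (\<lambda>y. f y * g y))" for i
  proof (rule Ck_on_cong_open[OF assms(1)])
    show "\<forall>y\<in>S. pd i f y * g y + f y * pd i g y = pd i (\<lambda>y. f y * g y) y"
      using Suc.prems assms(1) by (simp add: pd_mult Ck_on_imp_differentiable_at)
    have "Ck_on S k (pd i f)" "Ck_on S k (pd i g)" "Ck_on S k f" "Ck_on S k g"
      using Suc.prems Ck_on_Suc_imp_Ck_on unfolding Ck_on_Suc by blast+
    then show "Ck_on S k (\<lambda>y. pd i f y * g y + f y * pd i g y)"
      by (intro Ck_on_add[OF assms(1)] Suc.IH)
  qed
  with Suc.prems show ?case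
    unfolding Ck_on_Suc by (blast intro: differentiable_on_mult)
qed

lemma Ck_on_inverse:
  assumes "open S" "Ck_on S k f" "\<And>y. y \<in> S \<Longrightarrow> f y \<noteq> 0"
  shows "Ck_on S k (\<lambda>y. inverse (f y))"
  using assms(2)
proof (induction k)
  case 0
  have "(\<lambda>y. inverse (f y)) differentiable at x" if "x \<in> S" for x
    using 0 assms(1,3) that Deriv.has_derivative_inverse[of f x] Ck_on_imp_differentiable_at[of S 0 f]
    unfolding differentiable_def by (metis frechet_derivative_works)
  then show ?case
    unfolding Ck_on_0 differentiable_on_eq_differentiable_at[OF assms(1)] by blast
next
  case (Suc k)
  have inv: "Ck_on S k (\<lambda>y. inverse (f y))"
    using Suc Ck_on_Suc_imp_Ck_on by blast
  have "Ck_on S k (pd i (\<lambda>y. inverse (f y)))" for i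
  proof (rule Ck_on_cong_open[OF assms(1)])
    show "\<forall>y\<in>S. - (pd i f y * inverse (f y) * inverse (f y)) = pd i (\<lambda>y. inverse (f y)) y"
      using Suc.prems assms by (simp add: pd_inverse Ck_on_imp_differentiable_at)
    have "Ck_on S k (pd i f)"
      using Suc.prems unfolding Ck_on_Suc by blast
    then have "Ck_on S k (\<lambda>y. (- 1) * (pd i f y * inverse (f y) * inverse (f y)))"
      using inv by (intro Ck_on_mult[OF assms(1)] Ck_on_const)
    then show "Ck_on S k (\<lambda>y. - (pd i f y * inverse (f y) * inverse (f y)))"
      by simp
  qed
  moreover have "(\<lambda>y. inverse (f y)) differentiable_on S"
    using inv Ck_on_imp_differentiable_at[OF inv assms(1)]
    by (simp add: differentiable_on_eq_differentiable_at[OF assms(1)])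
  ultimately show ?case unfolding Ck_on_Suc by blast
qed

lemma smooth_on_const: "smooth_on S (\<lambda>y. c)"
  using Ck_on_const smooth_on_iff_Ck_on by blast

lemma smooth_on_add: "open S \<Longrightarrow> smooth_on S f \<Longrightarrow> smooth_on S g \<Longrightarrow> smooth_on S (\<lambda>y. f y + g y)"
  unfolding smooth_on_iff_Ck_on using Ck_on_add by blast

lemma smooth_on_mult: "open S \<Longrightarrow> smooth_on S f \<Longrightarrow> smooth_on S g \<Longrightarrow> smooth_on S (\<lambda>y. f y * g y)"
  unfolding smooth_on_iff_Ck_on using Ck_on_mult by blast

lemma smooth_on_minus:
  assumes "open S" "smooth_on S f"
  shows "smooth_on S (\<lambda>y. - f y)"
proof -
  have "smooth_on S (\<lambda>y. (- 1) * f y)"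
    by (rule smooth_on_mult[OF assms(1) smooth_on_const assms(2)])
  then show ?thesis by simp
qed

lemma smooth_on_diff: "open S \<Longrightarrow> smooth_on S f \<Longrightarrow> smooth_on S g \<Longrightarrow> smooth_on S (\<lambda>y. f y - g y)"
  using smooth_on_add[of S f "\<lambda>y. - g y"] smooth_on_minus[of S g] by simp

lemma smooth_on_divide:
  assumes "open S" "smooth_on S f" "smooth_on S g" "\<And>y. y \<in> S \<Longrightarrow> g y \<noteq> 0"
  shows "smooth_on S (\<lambda>y. f y / g y)"
  using smooth_on_mult[OF assms(1,2), of "\<lambda>y. inverse (g y)"] Ck_on_inverse[OF assms(1) _ assms(4)]
    assms(3) by (simp add: smooth_on_iff_Ck_on divide_inverse)

lemma smooth_on_sum:
  assumes "open S" "finite A" "\<And>a. a \<in> A \<Longrightarrow> smooth_on S (f a)"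
  shows "smooth_on S (\<lambda>y. \<Sum>a\<in>A. f a y)"
  using assms(2,3) by (induction A rule: finite_induct) (simp_all add: smooth_on_const smooth_on_add[OF assms(1)])

lemma smooth_on_prod:
  assumes "open S" "finite A" "\<And>a. a \<in> A \<Longrightarrow> smooth_on S (f a)"
  shows "smooth_on S (\<lambda>y. \<Prod>a\<in>A. f a y)"
  using assms(2,3) by (induction A rule: finite_induct) (simp_all add: smooth_on_const smooth_on_mult[OF assms(1)])

lemma smooth_on_cong_open:
  assumes "open S" "\<forall>y\<in>S. f y = g y" "smooth_on S f"
  shows "smooth_on S g"
  using assms Ck_on_cong_open unfolding smooth_on_iff_Ck_on by blast

lemma smooth_on_imp_differentiable_at: "smooth_on S f \<Longrightarrow> open S \<Longrightarrow> x \<in> S \<Longrightarrow> f differentiable at x"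
  unfolding smooth_on_iff_Ck_on using Ck_on_imp_differentiable_at by blast

lemma smooth_on_pd: "smooth_on S f \<Longrightarrow> smooth_on S (pd i f)"
  unfolding smooth_on_def
proof
  fix "is"
  assume "\<forall>is. foldr pd is f differentiable_on S"
  then have "foldr pd (is @ [i]) f differentiable_on S" by blast
  then show "foldr pd is (pd i f) differentiable_on S" by simp
qed

section \<open>Symmetry of second partial derivatives\<close>

lemma has_real_derivative_along_line:
  fixes f :: "real^'n::finite \<Rightarrow> real"
  assumes "f differentiable at (x + t *\<^sub>R u + w)"
  shows "((\<lambda>t. f (x + t *\<^sub>R u + w)) has_real_derivative
           frechet_derivative f (at (x + t *\<^sub>R u + w)) u) (at t)"
proof -
  let ?D = "frechet_derivative f (at (x + t *\<^sub>R u + w))"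
  have fD: "(f has_derivative ?D) (at (x + t *\<^sub>R u + w))"
    using assms frechet_derivative_works by blast
  have "((\<lambda>t. x + t *\<^sub>R u + w) has_derivative (\<lambda>s. s *\<^sub>R u)) (at t)"
    by (auto intro!: derivative_eq_intros)
  from diff_chain_at[OF this fD]
  have "((\<lambda>t. f (x + t *\<^sub>R u + w)) has_derivative (\<lambda>s. ?D (s *\<^sub>R u))) (at t)"
    by (simp add: o_def)
  then show ?thesis
    by (rule has_derivative_imp_has_field_derivative)
       (simp add: linear_cmul[OF has_derivative_linear[OF fD]])
qed

lemma second_difference_mean_value:
  fixes f :: "real^'n::finite \<Rightarrow> real" and i j :: 'n
  defines "u \<equiv> axis i 1" and "v \<equiv> axis j 1"
  assumes S: "cball x (2 * h) \<subseteq> S" and f: "\<And>y. y \<in> S \<Longrightarrow> f differentiable at y" and h: "0 < h"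
  obtains z where "0 < z" "z < h"
    "f (x + h *\<^sub>R u + h *\<^sub>R v) - f (x + h *\<^sub>R u) - f (x + h *\<^sub>R v) + f x
       = h * (pd i f (x + z *\<^sub>R u + h *\<^sub>R v) - pd i f (x + z *\<^sub>R u + 0))"
proof -
  define \<phi> where "\<phi> t = f (x + t *\<^sub>R u + h *\<^sub>R v) - f (x + t *\<^sub>R u + 0)" for t
  have inS: "x + t *\<^sub>R u + w \<in> S" if "0 \<le> t" "t \<le> h" "norm w \<le> h" for t w
  proof -
    have "norm (t *\<^sub>R u + w) \<le> t + h"
      using norm_triangle_ineq[of "t *\<^sub>R u" w] that by (simp add: u_def)
    moreover have "dist x (x + (t *\<^sub>R u + w)) = norm (t *\<^sub>R u + w)"
      by (metis dist_commute dist_norm add_diff_cancel_left')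
    ultimately have "x + (t *\<^sub>R u + w) \<in> cball x (2 * h)"
      using that by simp
    then show ?thesis using S by (auto simp: add.assoc)
  qed
  have "DERIV \<phi> t :> pd i f (x + t *\<^sub>R u + h *\<^sub>R v) - pd i f (x + t *\<^sub>R u + 0)"
    if "0 \<le> t" "t \<le> h" for t
  proof -
    have "f differentiable at (x + t *\<^sub>R u + h *\<^sub>R v)" "f differentiable at (x + t *\<^sub>R u + 0)"
      using f inS[of t "h *\<^sub>R v"] inS[of t 0] that h by (simp_all add: v_def)
    from DERIV_diff[OF this[THEN has_real_derivative_along_line]] show ?thesis
      unfolding \<phi>_def pd_def u_def .
  qed
  from MVT2[OF h this] obtain z where "0 < z" "z < h"
    "\<phi> h - \<phi> 0 = (h - 0) * (pd i f (x + z *\<^sub>R u + h *\<^sub>R v) - pd i f (x + z *\<^sub>R u + 0))"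
    by blast
  moreover have "\<phi> h - \<phi> 0 = f (x + h *\<^sub>R u + h *\<^sub>R v) - f (x + h *\<^sub>R u) - f (x + h *\<^sub>R v) + f x"
    unfolding \<phi>_def by (simp add: add.commute)
  ultimately show ?thesis using that by simp
qed

lemma second_difference_estimate:
  fixes f :: "real^'n::finite \<Rightarrow> real" and i j :: 'n
  defines "u \<equiv> axis i 1" and "v \<equiv> axis j 1"
  assumes S: "cball x (2 * h) \<subseteq> S" and f: "\<And>y. y \<in> S \<Longrightarrow> f differentiable at y" and h: "0 < h"
    and D: "linear D" and e: "0 \<le> e"
    and approx: "\<And>y. norm (y - x) \<le> 2 * h \<Longrightarrow> \<bar>pd i f y - pd i f x - D (y - x)\<bar> \<le> e * norm (y - x)"
  shows "\<bar>(f (x + h *\<^sub>R u + h *\<^sub>R v) - f (x + h *\<^sub>R u) - f (x + h *\<^sub>R v) + f x) - h\<^sup>2 * D v\<bar>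
    \<le> 3 * e * h\<^sup>2"
proof -
  obtain z where z: "0 < z" "z < h"
    "f (x + h *\<^sub>R u + h *\<^sub>R v) - f (x + h *\<^sub>R u) - f (x + h *\<^sub>R v) + f x
       = h * (pd i f (x + z *\<^sub>R u + h *\<^sub>R v) - pd i f (x + z *\<^sub>R u + 0))"
    using second_difference_mean_value[OF S f h] unfolding u_def v_def by blast
  have nu: "norm (z *\<^sub>R u) = z" "norm (h *\<^sub>R v) = h"
    using z h by (simp_all add: u_def v_def)
  have n: "norm (z *\<^sub>R u + h *\<^sub>R v) \<le> z + h"
    using norm_triangle_ineq[of "z *\<^sub>R u" "h *\<^sub>R v"] nu by simp
  have "\<bar>pd i f (x + z *\<^sub>R u + h *\<^sub>R v) - pd i f x - D (z *\<^sub>R u + h *\<^sub>R v)\<bar> \<le> e * norm (z *\<^sub>R u + h *\<^sub>R v)"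
    using approx[of "x + (z *\<^sub>R u + h *\<^sub>R v)"] n z by (simp add: add.assoc)
  moreover have "e * norm (z *\<^sub>R u + h *\<^sub>R v) \<le> e * (z + h)"
    using mult_left_mono[OF n e] .
  moreover have "e * (z + h) \<le> 2 * e * h"
    using mult_left_mono[of "z + h" "2 * h" e] z e by (simp add: algebra_simps)
  ultimately have e1: "\<bar>pd i f (x + z *\<^sub>R u + h *\<^sub>R v) - pd i f x - D (z *\<^sub>R u + h *\<^sub>R v)\<bar> \<le> 2 * e * h"
    by linarith
  have "\<bar>pd i f (x + z *\<^sub>R u) - pd i f x - D (z *\<^sub>R u)\<bar> \<le> e * z"
    using approx[of "x + z *\<^sub>R u"] nu z by simp
  moreover have "e * z \<le> e * h" using z e by (simp add: mult_left_mono)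
  ultimately have e2: "\<bar>pd i f (x + z *\<^sub>R u) - pd i f x - D (z *\<^sub>R u)\<bar> \<le> e * h"
    by linarith
  have "D (z *\<^sub>R u + h *\<^sub>R v) = D (z *\<^sub>R u) + h * D v"
    using D by (simp add: linear_add linear_cmul)
  then have "\<bar>pd i f (x + z *\<^sub>R u + h *\<^sub>R v) - pd i f (x + z *\<^sub>R u) - h * D v\<bar> \<le> 3 * e * h"
    using e1 e2 by linarith
  then have "\<bar>h * (pd i f (x + z *\<^sub>R u + h *\<^sub>R v) - pd i f (x + z *\<^sub>R u) - h * D v)\<bar> \<le> h * (3 * e * h)"
    using h by (simp add: abs_mult)
  then show ?thesis using z(3) by (simp add: algebra_simps power2_eq_square)
qed

lemma second_difference_approx:
  fixes f :: "real^'n::finite \<Rightarrow> real"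
  assumes S: "open S" "x \<in> S" and f: "\<And>y. y \<in> S \<Longrightarrow> f differentiable at y"
    and dfi: "pd i f differentiable at x" and e: "e > 0"
  shows "\<exists>d>0. \<forall>h. 0 < h \<and> h < d \<longrightarrow>
     \<bar>(f (x + h *\<^sub>R axis i 1 + h *\<^sub>R axis j 1) - f (x + h *\<^sub>R axis i 1) - f (x + h *\<^sub>R axis j 1) + f x)
        - h\<^sup>2 * pd j (pd i f) x\<bar> \<le> 3 * e * h\<^sup>2"
proof -
  define D where "D = frechet_derivative (pd i f) (at x)"
  have dD: "(pd i f has_derivative D) (at x)"
    using dfi frechet_derivative_works unfolding D_def by blast
  obtain r where r: "r > 0" "ball x r \<subseteq> S"
    using S open_contains_ball by blast
  obtain d1 where d1: "d1 > 0"
    "\<And>y. norm (y - x) < d1 \<Longrightarrow> \<bar>pd i f y - pd i f x - D (y - x)\<bar> \<le> e * norm (y - x)"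
    using dD e unfolding has_derivative_at_alt by (metis real_norm_def)
  define d where "d = min (r / 4) (d1 / 4)"
  have "\<bar>(f (x + h *\<^sub>R axis i 1 + h *\<^sub>R axis j 1) - f (x + h *\<^sub>R axis i 1) - f (x + h *\<^sub>R axis j 1) + f x)
      - h\<^sup>2 * D (axis j 1)\<bar> \<le> 3 * e * h\<^sup>2" if h: "0 < h" "h < d" for h
  proof (rule second_difference_estimate[OF _ f h(1) has_derivative_linear[OF dD] less_imp_le[OF e]])
    show "cball x (2 * h) \<subseteq> S"
      using r h unfolding d_def by (intro subset_trans[OF _ r(2)]) auto
    show "\<bar>pd i f y - pd i f x - D (y - x)\<bar> \<le> e * norm (y - x)" if "norm (y - x) \<le> 2 * h" for y
      using d1(2) that h unfolding d_def by simp
  qed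
  moreover have "D (axis j 1) = pd j (pd i f) x"
    unfolding D_def pd_def by simp
  moreover have "d > 0" unfolding d_def using r d1 by simp
  ultimately show ?thesis by auto
qed
text \<open>Schwarz's theorem under Young's hypotheses: no continuity of the second partials
  is needed.\<close>

lemma pd_commute:
  fixes f :: "real^'n::finite \<Rightarrow> real"
  assumes S: "open S" "x \<in> S" and f: "\<And>y. y \<in> S \<Longrightarrow> f differentiable at y"
    and dfi: "pd i f differentiable at x" and dfj: "pd j f differentiable at x"
  shows "pd j (pd i f) x = pd i (pd j f) x"
proof (rule ccontr)
  let ?A = "pd j (pd i f) x" and ?B = "pd i (pd j f) x"
  assume ne: "?A \<noteq> ?B"
  define e where "e = \<bar>?A - ?B\<bar> / 7"
  have e: "e > 0" using ne unfolding e_def by simp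
  obtain d1 where d1: "d1 > 0" "\<forall>h. 0 < h \<and> h < d1 \<longrightarrow>
     \<bar>(f (x + h *\<^sub>R axis i 1 + h *\<^sub>R axis j 1) - f (x + h *\<^sub>R axis i 1) - f (x + h *\<^sub>R axis j 1) + f x)
        - h\<^sup>2 * ?A\<bar> \<le> 3 * e * h\<^sup>2"
    using second_difference_approx[OF S f dfi e] by blast
  obtain d2 where d2: "d2 > 0" "\<forall>h. 0 < h \<and> h < d2 \<longrightarrow>
     \<bar>(f (x + h *\<^sub>R axis j 1 + h *\<^sub>R axis i 1) - f (x + h *\<^sub>R axis j 1) - f (x + h *\<^sub>R axis i 1) + f x)
        - h\<^sup>2 * ?B\<bar> \<le> 3 * e * h\<^sup>2"
    using second_difference_approx[OF S f dfj e] by blast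
  define h where "h = min d1 d2 / 2"
  have h: "0 < h" "h < d1" "h < d2" unfolding h_def using d1 d2 by auto
  have swap: "x + h *\<^sub>R axis j 1 + h *\<^sub>R axis i 1 = x + h *\<^sub>R axis i 1 + h *\<^sub>R axis j 1"
    by (simp add: algebra_simps)
  have "\<bar>h\<^sup>2 * ?A - h\<^sup>2 * ?B\<bar> \<le> 6 * e * h\<^sup>2"
    using d1(2)[rule_format, of h] d2(2)[rule_format, of h] h unfolding swap by linarith
  then have "h\<^sup>2 * \<bar>?A - ?B\<bar> \<le> h\<^sup>2 * (6 * e)"
    by (simp add: abs_mult right_diff_distrib[symmetric] mult.commute mult.left_commute)
  then have "\<bar>?A - ?B\<bar> \<le> 6 * e" using h by simp
  moreover have "\<bar>?A - ?B\<bar> = 7 * e" unfolding e_def by simp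
  ultimately show False using e by linarith
qed

lemma smooth_on_pd_commute:
  "open S \<Longrightarrow> x \<in> S \<Longrightarrow> smooth_on S f \<Longrightarrow> pd j (pd i f) x = pd i (pd j f) x"
  by (rule pd_commute) (auto intro: smooth_on_imp_differentiable_at smooth_on_pd)

section \<open>Matrices depending smoothly on a point\<close>

lemma sum_UNIV_option: "(\<Sum>i\<in>(UNIV::'a::finite option set). f i) = f None + (\<Sum>a\<in>UNIV. f (Some a))"
proof -
  have "(\<Sum>i\<in>(UNIV::'a option set). f i) = f None + (\<Sum>i\<in>range Some. f i)"
    by (simp add: UNIV_option_conv)
  also have "(\<Sum>i\<in>range Some. f i) = (\<Sum>a\<in>UNIV. f (Some a))"
    by (subst sum.reindex) (auto simp: inj_on_def)
  finally show ?thesis .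
qed

lemma matrix_matrix_mult_component: "(X ** Y) $ i $ j = (\<Sum>k\<in>UNIV. X $ i $ k * Y $ k $ j)"
  by (simp add: matrix_matrix_mult_def)

lemma
  fixes A :: "'a::field^'n^'n"
  assumes "invertible A"
  shows matrix_inv_right: "A ** matrix_inv A = mat 1"
    and matrix_inv_left: "matrix_inv A ** A = mat 1"
proof -
  have "\<exists>A'. A ** A' = mat 1 \<and> A' ** A = mat 1" using assms unfolding invertible_def by blast
  then have "A ** matrix_inv A = mat 1 \<and> matrix_inv A ** A = mat 1"
    unfolding matrix_inv_def by (rule someI_ex)
  then show "A ** matrix_inv A = mat 1" "matrix_inv A ** A = mat 1" by auto
qed

lemma transpose_matrix_inv_symmetric:
  fixes A :: "'a::field^'n^'n"
  assumes "invertible A" "transpose A = A"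
  shows "transpose (matrix_inv A) = matrix_inv A"
proof -
  have "transpose (matrix_inv A) ** A = transpose (A ** matrix_inv A)"
    using assms(2) by (metis matrix_transpose_mul)
  then have left_inv: "transpose (matrix_inv A) ** A = mat 1"
    using matrix_inv_right[OF assms(1)] by simp
  have "transpose (matrix_inv A) = transpose (matrix_inv A) ** (A ** matrix_inv A)"
    using matrix_inv_right[OF assms(1)] by simp
  also have "\<dots> = matrix_inv A"
    by (simp add: matrix_mul_assoc left_inv)
  finally show ?thesis .
qed

lemma matrix_inv_Cramer:
  fixes A :: "real^'n^'n"
  assumes "invertible A"
  shows "matrix_inv A $ i $ j = det (\<chi> r c. if c = i then (if r = j then 1 else 0) else A $ r $ c) / det A"
proof -
  let ?b = "axis j (1::real)"
  have "A *v (matrix_inv A *v ?b) = ?b"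
    using matrix_inv_right[OF assms] by (simp add: matrix_vector_mul_assoc)
  then have "matrix_inv A *v ?b = (\<chi> k. det (\<chi> r c. if c = k then ?b $ r else A $ r $ c) / det A)"
    using cramer[of A] assms invertible_det_nz by blast
  moreover have "(matrix_inv A *v ?b) $ i = matrix_inv A $ i $ j"
    by (simp add: matrix_vector_mult_def axis_def if_distrib sum.If_cases cong: if_cong)
  moreover have "(\<chi> r c. if c = i then ?b $ r else A $ r $ c)
      = (\<chi> r c. if c = i then (if r = j then 1 else 0) else A $ r $ c)"
    by (simp add: axis_def vec_eq_iff)
  ultimately show ?thesis by simp
qed

lemma smooth_on_det:
  fixes M :: "real^'n::finite \<Rightarrow> real^'m::finite^'m"
  assumes "open S" "\<And>i j. smooth_on S (\<lambda>y. M y $ i $ j)"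
  shows "smooth_on S (\<lambda>y. det (M y))"
  unfolding det_def
  by (intro smooth_on_sum smooth_on_mult smooth_on_prod smooth_on_const assms finite_permutations)
     simp_all

lemma smooth_on_if_const: "smooth_on S f \<Longrightarrow> smooth_on S (\<lambda>y. if b then c else f y)"
  by (cases b) (simp_all add: smooth_on_const)

lemma smooth_on_matrix_inv:
  fixes M :: "real^'n::finite \<Rightarrow> real^'m::finite^'m"
  assumes "open S" "\<And>i j. smooth_on S (\<lambda>y. M y $ i $ j)" "\<And>y. y \<in> S \<Longrightarrow> invertible (M y)"
  shows "smooth_on S (\<lambda>y. matrix_inv (M y) $ i $ j)"
proof -
  have "smooth_on S (\<lambda>y. det (\<chi> r c. if c = i then (if r = j then 1 else 0) else M y $ r $ c))"
    by (rule smooth_on_det[OF assms(1)]) (auto intro!: smooth_on_if_const assms(2))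
  then have "smooth_on S (\<lambda>y. det (\<chi> r c. if c = i then (if r = j then 1 else 0) else M y $ r $ c)
      / det (M y))"
    using smooth_on_divide[OF assms(1) _ smooth_on_det[OF assms(1,2)]] assms(3) invertible_det_nz
    by blast
  then show ?thesis
    by (rule smooth_on_cong_open[OF assms(1), rotated]) (simp add: matrix_inv_Cramer assms(3))
qed

text \<open>Differentiating \<open>M\<^sup>-\<^sup>1 M = 1\<close> and multiplying by \<open>M\<^sup>-\<^sup>1\<close> on the right.\<close>

lemma pd_matrix_inv:
  fixes M :: "real^'n::finite \<Rightarrow> real^'m::finite^'m"
  assumes S: "open S" "y \<in> S"
    and M: "\<And>i j. smooth_on S (\<lambda>z. M z $ i $ j)" "\<And>z. z \<in> S \<Longrightarrow> invertible (M z)"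
  shows "pd e (\<lambda>z. matrix_inv (M z) $ i $ m) y =
    - (\<Sum>k\<in>UNIV. \<Sum>j\<in>UNIV. matrix_inv (M y) $ i $ k * pd e (\<lambda>z. M z $ k $ j) y * matrix_inv (M y) $ j $ m)"
proof -
  let ?N = "\<lambda>z. matrix_inv (M z)"
  have diff: "(\<lambda>z. M z $ k $ j) differentiable at y" "(\<lambda>z. ?N z $ k $ j) differentiable at y" for k j
    using S M smooth_on_matrix_inv[OF S(1) M] smooth_on_imp_differentiable_at by blast+
  have "pd e (\<lambda>z. \<Sum>k\<in>UNIV. ?N z $ i $ k * M z $ k $ j) y = 0" for j
  proof (rule pd_eq_0_if_constant_on[OF S])
    fix z assume "z \<in> S"
    then show "(\<Sum>k\<in>UNIV. ?N z $ i $ k * M z $ k $ j) = mat 1 $ i $ j"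
      using matrix_inv_left[OF M(2)] by (simp flip: matrix_matrix_mult_component)
  qed
  then have deriv_0: "(\<Sum>k\<in>UNIV. pd e (\<lambda>z. ?N z $ i $ k) y * M y $ k $ j
      + ?N y $ i $ k * pd e (\<lambda>z. M z $ k $ j) y) = 0" for j
    by (simp add: pd_sum pd_mult diff)
  have right_inv: "(\<Sum>j\<in>UNIV. M y $ k $ j * ?N y $ j $ m) = (if k = m then 1 else 0)" for k
    using matrix_inv_right[OF M(2)[OF S(2)]] by (simp flip: matrix_matrix_mult_component add: mat_def)
  have "0 = (\<Sum>j\<in>UNIV. (\<Sum>k\<in>UNIV. pd e (\<lambda>z. ?N z $ i $ k) y * M y $ k $ j
      + ?N y $ i $ k * pd e (\<lambda>z. M z $ k $ j) y) * ?N y $ j $ m)"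
    using deriv_0 by simp
  also have "\<dots> = (\<Sum>j\<in>UNIV. \<Sum>k\<in>UNIV. pd e (\<lambda>z. ?N z $ i $ k) y * M y $ k $ j * ?N y $ j $ m)
     + (\<Sum>j\<in>UNIV. \<Sum>k\<in>UNIV. ?N y $ i $ k * pd e (\<lambda>z. M z $ k $ j) y * ?N y $ j $ m)"
    by (simp add: sum_distrib_right sum.distrib ring_distribs)
  also have "(\<Sum>j\<in>UNIV. \<Sum>k\<in>UNIV. pd e (\<lambda>z. ?N z $ i $ k) y * M y $ k $ j * ?N y $ j $ m)
      = (\<Sum>k\<in>UNIV. pd e (\<lambda>z. ?N z $ i $ k) y * (\<Sum>j\<in>UNIV. M y $ k $ j * ?N y $ j $ m))"
    by (subst sum.swap) (simp add: sum_distrib_left mult.assoc)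
  also have "\<dots> = pd e (\<lambda>z. ?N z $ i $ m) y"
    by (simp add: right_inv if_distrib cong: if_cong)
  also have "(\<Sum>j\<in>UNIV. \<Sum>k\<in>UNIV. ?N y $ i $ k * pd e (\<lambda>z. M z $ k $ j) y * ?N y $ j $ m)
      = (\<Sum>k\<in>UNIV. \<Sum>j\<in>UNIV. ?N y $ i $ k * pd e (\<lambda>z. M z $ k $ j) y * ?N y $ j $ m)"
    by (rule sum.swap)
  finally show ?thesis by linarith
qed

text \<open>\<open>log_det_pd M e\<close> is \<open>tr (M\<^sup>-\<^sup>1 \<partial>\<^sub>e M) = \<partial>\<^sub>e log \<bar>det M\<bar>\<close>; the symmetry of its
  derivatives is proved directly from \<open>pd_matrix_inv\<close>, without logarithms.\<close>

definition log_det_pd :: "(real^'n::finite \<Rightarrow> real^'m::finite^'m) \<Rightarrow> 'n \<Rightarrow> real^'n \<Rightarrow> real" where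
  "log_det_pd M e y = (\<Sum>i\<in>UNIV. \<Sum>j\<in>UNIV. matrix_inv (M y) $ i $ j * pd e (\<lambda>z. M z $ j $ i) y)"

lemma sum_reverse4:
  "(\<Sum>i\<in>A. \<Sum>j\<in>B. \<Sum>k\<in>C. \<Sum>m\<in>D. f i j k m) = (\<Sum>m\<in>D. \<Sum>k\<in>C. \<Sum>j\<in>B. \<Sum>i\<in>A. f i j k m)"
proof -
  have "(\<Sum>i\<in>A. \<Sum>j\<in>B. \<Sum>k\<in>C. \<Sum>m\<in>D. f i j k m) = (\<Sum>i\<in>A. \<Sum>j\<in>B. \<Sum>m\<in>D. \<Sum>k\<in>C. f i j k m)"
    by (intro sum.cong refl) (rule sum.swap)
  also have "\<dots> = (\<Sum>i\<in>A. \<Sum>m\<in>D. \<Sum>j\<in>B. \<Sum>k\<in>C. f i j k m)"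
    by (intro sum.cong refl) (rule sum.swap)
  also have "\<dots> = (\<Sum>m\<in>D. \<Sum>i\<in>A. \<Sum>k\<in>C. \<Sum>j\<in>B. f i j k m)"
    by (subst sum.swap) (intro sum.cong refl, rule sum.swap)
  also have "\<dots> = (\<Sum>m\<in>D. \<Sum>k\<in>C. \<Sum>j\<in>B. \<Sum>i\<in>A. f i j k m)"
    by (intro sum.cong refl) (subst sum.swap, intro sum.cong refl, rule sum.swap)
  finally show ?thesis .
qed

lemma pd_log_det_pd_commute:
  fixes M :: "real^'n::finite \<Rightarrow> real^'m::finite^'m"
  assumes S: "open S" "x \<in> S"
    and M: "\<And>i j. smooth_on S (\<lambda>z. M z $ i $ j)" "\<And>z. z \<in> S \<Longrightarrow> invertible (M z)"
  shows "pd a (log_det_pd M b) x = pd b (log_det_pd M a) x"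
proof -
  let ?N = "\<lambda>z. matrix_inv (M z)"
  define H where "H a b = (\<Sum>i\<in>UNIV. \<Sum>j\<in>UNIV. \<Sum>k\<in>UNIV. \<Sum>m\<in>UNIV.
      ?N x $ i $ k * pd a (\<lambda>z. M z $ k $ m) x * ?N x $ m $ j * pd b (\<lambda>z. M z $ j $ i) x)" for a b
  have diff: "(\<lambda>z. M z $ k $ j) differentiable at x" "(\<lambda>z. ?N z $ k $ j) differentiable at x"
    "pd b (\<lambda>z. M z $ k $ j) differentiable at x" for k j b
    using S M smooth_on_matrix_inv[OF S(1) M] smooth_on_imp_differentiable_at smooth_on_pd by blast+
  have "pd a (log_det_pd M b) x
      = (\<Sum>i\<in>UNIV. \<Sum>j\<in>UNIV. pd a (\<lambda>z. ?N z $ i $ j) x * pd b (\<lambda>z. M z $ j $ i) x)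
      + (\<Sum>i\<in>UNIV. \<Sum>j\<in>UNIV. ?N x $ i $ j * pd a (pd b (\<lambda>z. M z $ j $ i)) x)" for a b
    unfolding log_det_pd_def[abs_def] by (simp add: pd_sum pd_mult diff sum.distrib)
  also have "(\<Sum>i\<in>UNIV. \<Sum>j\<in>UNIV. pd a (\<lambda>z. ?N z $ i $ j) x * pd b (\<lambda>z. M z $ j $ i) x) = - H a b"
    for a b by (simp add: H_def pd_matrix_inv[OF S M] sum_distrib_right sum_negf)
  finally have "pd a (log_det_pd M b) x = - H a b
      + (\<Sum>i\<in>UNIV. \<Sum>j\<in>UNIV. ?N x $ i $ j * pd a (pd b (\<lambda>z. M z $ j $ i)) x)" for a b .
  moreover have "H a b = H b a"
    unfolding H_def by (subst sum_reverse4) (simp add: mult.commute mult.left_commute)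
  moreover have "pd a (pd b (\<lambda>z. M z $ j $ i)) x = pd b (pd a (\<lambda>z. M z $ j $ i)) x" for i j
    by (rule smooth_on_pd_commute[OF S M(1)])
  ultimately show ?thesis by simp
qed

lemma sum_pd_mult_eq_if_constant_on:
  fixes u v :: "'a::finite \<Rightarrow> real^'n::finite \<Rightarrow> real"
  assumes "open S" "x \<in> S" "\<And>b. u b differentiable at x" "\<And>b. v b differentiable at x"
    and "\<And>y. y \<in> S \<Longrightarrow> (\<Sum>b\<in>UNIV. u b y * v b y) = c"
  shows "(\<Sum>b\<in>UNIV. pd i (u b) x * v b x) = - (\<Sum>b\<in>UNIV. u b x * pd i (v b) x)"
proof -
  have "pd i (\<lambda>y. \<Sum>b\<in>UNIV. u b y * v b y) x = 0"
    using assms(1,2,5) by (rule pd_eq_0_if_constant_on)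
  then show ?thesis
    using assms(3,4) by (simp add: pd_sum pd_mult sum.distrib eq_neg_iff_add_eq_0)
qed

lemma sum_sum_antisymmetric_eq_0:
  fixes X :: "'a \<Rightarrow> 'a \<Rightarrow> real"
  assumes "\<And>a b. X a b = - X b a"
  shows "(\<Sum>a\<in>A. \<Sum>b\<in>A. w a * w b * X a b) = 0"
proof -
  have "(\<Sum>a\<in>A. \<Sum>b\<in>A. w a * w b * X a b) = (\<Sum>b\<in>A. \<Sum>a\<in>A. - (w b * w a * X b a))"
    by (subst sum.swap) (intro sum.cong refl, metis assms minus_mult_right mult.commute)
  also have "\<dots> = - (\<Sum>a\<in>A. \<Sum>b\<in>A. w a * w b * X a b)"
    by (simp add: sum_negf)
  finally show ?thesis by simp
qed

section \<open>Torsion-free connections in a chart\<close>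

text \<open>\<open>cov_deriv Gam v c b\<close> is \<open>\<nabla>\<^sub>b v\<^sup>c\<close>, and \<open>cov_div Gam T b\<close> is the divergence
  \<open>\<nabla>\<^sub>c T\<^sup>c\<^sub>b\<close> of a (1,1)-tensor \<open>T\<^sup>c\<^sub>b = T c b\<close>.\<close>

definition cov_deriv ::
  "('n::finite \<Rightarrow> 'n \<Rightarrow> 'n \<Rightarrow> real^'n \<Rightarrow> real) \<Rightarrow> ('n \<Rightarrow> real^'n \<Rightarrow> real) \<Rightarrow> 'n \<Rightarrow> 'n \<Rightarrow> real^'n \<Rightarrow> real"
  where "cov_deriv Gam v c b y = pd b (v c) y + (\<Sum>d\<in>UNIV. Gam c b d y * v d y)"

definition cov_div ::
  "('n::finite \<Rightarrow> 'n \<Rightarrow> 'n \<Rightarrow> real^'n \<Rightarrow> real) \<Rightarrow> ('n \<Rightarrow> 'n \<Rightarrow> real^'n \<Rightarrow> real) \<Rightarrow> 'n \<Rightarrow> real^'n \<Rightarrow> real"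
  where "cov_div Gam T b y = (\<Sum>c\<in>UNIV. pd c (T c b) y
     + (\<Sum>e\<in>UNIV. Gam c c e y * T e b y) - (\<Sum>e\<in>UNIV. Gam e c b y * T c e y))"

locale torsion_free_connection =
  fixes S :: "(real^'n::finite) set"
    and Gam :: "'n \<Rightarrow> 'n \<Rightarrow> 'n \<Rightarrow> real^'n \<Rightarrow> real"
  assumes open_S: "open S"
    and smooth_Gam [simp]: "smooth_on S (Gam a b c)"
    and Gam_sym: "y \<in> S \<Longrightarrow> Gam a b c y = Gam a c b y"
begin

lemmas smooth_on_rules [simp] = smooth_on_const smooth_on_add[OF open_S] smooth_on_mult[OF open_S]
  smooth_on_diff[OF open_S] smooth_on_minus[OF open_S] smooth_on_pd

lemma smooth_on_sum_UNIV [simp]: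
  fixes f :: "'a::finite \<Rightarrow> real^'n \<Rightarrow> real"
  shows "(\<And>a. smooth_on S (f a)) \<Longrightarrow> smooth_on S (\<lambda>y. \<Sum>a\<in>UNIV. f a y)"
  by (rule smooth_on_sum[OF open_S]) auto

lemma smooth_on_divide_const [simp]: "smooth_on S f \<Longrightarrow> smooth_on S (\<lambda>y. f y / c)"
  using smooth_on_mult[OF open_S _ smooth_on_const, of f "inverse c"] by (simp add: divide_inverse)

lemma differentiable_at_if_smooth_on [simp]: "y \<in> S \<Longrightarrow> smooth_on S f \<Longrightarrow> f differentiable at y"
  by (rule smooth_on_imp_differentiable_at[OF _ open_S])

lemmas pd_rules = pd_add pd_diff pd_mult pd_sum_UNIV pd_const pd_divide_const

lemma cov_div_add:
  assumes "x \<in> S" "\<And>c b. smooth_on S (T c b)" "\<And>c b. smooth_on S (T' c b)"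
  shows "cov_div Gam (\<lambda>c b y. T c b y + T' c b y) b x = cov_div Gam T b x + cov_div Gam T' b x"
  unfolding cov_div_def using assms by (simp add: pd_rules sum.distrib sum_subtractf algebra_simps)

lemma cov_div_cong_open:
  assumes "x \<in> S" "\<And>c b y. y \<in> S \<Longrightarrow> T c b y = T' c b y"
  shows "cov_div Gam T b x = cov_div Gam T' b x"
proof -
  have "pd c (T c b) x = pd c (T' c b) x" for c b
    using assms by (intro pd_cong_open[OF open_S]) auto
  then show ?thesis unfolding cov_div_def using assms by simp
qed

lemma sum_Ric_contract:
  "(\<Sum>a\<in>UNIV. Ric Gam a b x * v a x) =
      (\<Sum>c\<in>UNIV. \<Sum>a\<in>UNIV. pd c (Gam c b a) x * v a x) - (\<Sum>c\<in>UNIV. \<Sum>a\<in>UNIV. pd b (Gam c c a) x * v a x)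
    + (\<Sum>c\<in>UNIV. \<Sum>a\<in>UNIV. \<Sum>e\<in>UNIV. Gam c c e x * Gam e b a x * v a x)
    - (\<Sum>c\<in>UNIV. \<Sum>a\<in>UNIV. \<Sum>e\<in>UNIV. Gam c b e x * Gam e c a x * v a x)"
proof -
  have "(\<Sum>a\<in>UNIV. Ric Gam a b x * v a x) = (\<Sum>c\<in>UNIV. \<Sum>a\<in>UNIV. Riem Gam c a c b x * v a x)"
    unfolding Ric_def by (subst sum.swap) (simp add: sum_distrib_right)
  then show ?thesis
    unfolding Riem_def by (simp add: sum.distrib sum_subtractf algebra_simps sum_distrib_right sum_distrib_left)
qed

lemma cov_div_cov_deriv:
  assumes x: "x \<in> S" and v: "\<And>a. smooth_on S (v a)"
  shows "cov_div Gam (cov_deriv Gam v) b x =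
      (\<Sum>c\<in>UNIV. pd c (pd b (v c)) x) + (\<Sum>c\<in>UNIV. \<Sum>a\<in>UNIV. pd c (Gam c b a) x * v a x)
    + (\<Sum>c\<in>UNIV. \<Sum>d\<in>UNIV. Gam c c d x * pd b (v d) x)
    + (\<Sum>c\<in>UNIV. \<Sum>a\<in>UNIV. \<Sum>e\<in>UNIV. Gam c c e x * Gam e b a x * v a x)
    - (\<Sum>c\<in>UNIV. \<Sum>a\<in>UNIV. \<Sum>e\<in>UNIV. Gam c b e x * Gam e c a x * v a x)"
proof -
  define W where "W = (\<Sum>c\<in>UNIV. \<Sum>d\<in>UNIV. Gam c b d x * pd c (v d) x)"
  have "(\<Sum>c\<in>UNIV. pd c (cov_deriv Gam v c b) x) = (\<Sum>c\<in>UNIV. pd c (pd b (v c)) x)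
      + (\<Sum>c\<in>UNIV. \<Sum>a\<in>UNIV. pd c (Gam c b a) x * v a x) + W"
    unfolding W_def cov_deriv_def[abs_def] using x v by (simp add: pd_rules sum.distrib algebra_simps)
  moreover have "(\<Sum>c\<in>UNIV. \<Sum>e\<in>UNIV. Gam c c e x * cov_deriv Gam v e b x)
      = (\<Sum>c\<in>UNIV. \<Sum>d\<in>UNIV. Gam c c d x * pd b (v d) x)
      + (\<Sum>c\<in>UNIV. \<Sum>a\<in>UNIV. \<Sum>e\<in>UNIV. Gam c c e x * Gam e b a x * v a x)"
    unfolding cov_deriv_def by (simp add: sum.distrib ring_distribs sum_distrib_left mult.assoc)
      (rule sum.cong[OF refl], rule sum.swap)
  moreover have "(\<Sum>c\<in>UNIV. \<Sum>e\<in>UNIV. Gam e c b x * cov_deriv Gam v c e x)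
      = W + (\<Sum>c\<in>UNIV. \<Sum>a\<in>UNIV. \<Sum>e\<in>UNIV. Gam c b e x * Gam e c a x * v a x)"
  proof -
    have "(\<Sum>c\<in>UNIV. \<Sum>e\<in>UNIV. Gam e c b x * pd e (v c) x) = W"
      unfolding W_def using Gam_sym[OF x] by (subst sum.swap) simp
    moreover have "(\<Sum>c\<in>UNIV. \<Sum>e\<in>UNIV. \<Sum>d\<in>UNIV. Gam e c b x * Gam c e d x * v d x)
        = (\<Sum>c\<in>UNIV. \<Sum>a\<in>UNIV. \<Sum>e\<in>UNIV. Gam c b e x * Gam e c a x * v a x)"
      using Gam_sym[OF x] by (subst sum.swap) (simp, rule sum.cong[OF refl], rule sum.swap)
    ultimately show ?thesis
      unfolding cov_deriv_def by (simp add: sum.distrib ring_distribs sum_distrib_left mult.assoc)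
  qed
  ultimately show ?thesis
    unfolding cov_div_def by (simp add: sum.distrib sum_subtractf)
qed

lemma pd_trace_cov_deriv:
  assumes x: "x \<in> S" and v: "\<And>a. smooth_on S (v a)"
  shows "pd b (\<lambda>y. \<Sum>c\<in>UNIV. cov_deriv Gam v c c y) x =
      (\<Sum>c\<in>UNIV. pd b (pd c (v c)) x) + (\<Sum>c\<in>UNIV. \<Sum>a\<in>UNIV. pd b (Gam c c a) x * v a x)
    + (\<Sum>c\<in>UNIV. \<Sum>d\<in>UNIV. Gam c c d x * pd b (v d) x)"
  unfolding cov_deriv_def using x v by (simp add: pd_rules sum.distrib algebra_simps)

lemma contracted_Ricci_identity:
  assumes x: "x \<in> S" and v: "\<And>a. smooth_on S (v a)"
  shows "(\<Sum>a\<in>UNIV. Ric Gam a b x * v a x)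
    = cov_div Gam (cov_deriv Gam v) b x - pd b (\<lambda>y. \<Sum>c\<in>UNIV. cov_deriv Gam v c c y) x"
proof -
  have "pd c (pd b (v c)) x = pd b (pd c (v c)) x" for c
    using smooth_on_pd_commute[OF open_S x v] .
  then show ?thesis
    unfolding sum_Ric_contract cov_div_cov_deriv[OF x v] pd_trace_cov_deriv[OF x v] by simp
qed

lemma Ric_antisym:
  assumes x: "x \<in> S"
  shows "Ric Gam a b x - Ric Gam b a x
    = pd a (\<lambda>y. \<Sum>c\<in>UNIV. Gam c c b y) x - pd b (\<lambda>y. \<Sum>c\<in>UNIV. Gam c c a y) x"
proof -
  have "pd c (Gam c b a) x = pd c (Gam c a b) x" for c
    by (rule pd_cong_open[OF open_S x]) (simp add: Gam_sym)
  moreover have "(\<Sum>c\<in>UNIV. \<Sum>e\<in>UNIV. Gam c c e x * Gam e b a x)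
      = (\<Sum>c\<in>UNIV. \<Sum>e\<in>UNIV. Gam c c e x * Gam e a b x)"
    using Gam_sym[OF x] by simp
  moreover have "(\<Sum>c\<in>UNIV. \<Sum>e\<in>UNIV. Gam c b e x * Gam e c a x)
      = (\<Sum>c\<in>UNIV. \<Sum>e\<in>UNIV. Gam c a e x * Gam e c b x)"
    using Gam_sym[OF x] by (subst sum.swap) (simp add: mult.commute)
  moreover have "Ric Gam a b x = (\<Sum>c\<in>UNIV. pd c (Gam c b a) x) - pd b (\<lambda>y. \<Sum>c\<in>UNIV. Gam c c a y) x
      + (\<Sum>c\<in>UNIV. \<Sum>e\<in>UNIV. Gam c c e x * Gam e b a x) - (\<Sum>c\<in>UNIV. \<Sum>e\<in>UNIV. Gam c b e x * Gam e c a x)"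
    for a b unfolding Ric_def Riem_def using x by (simp add: pd_rules sum.distrib sum_subtractf)
  ultimately show ?thesis by simp
qed

end

section \<open>Null metric hypersurface data with its connection\<close>

locale null_hypersurface = torsion_free_connection S Gam
  for S :: "(real^'n::finite) set" and Gam +
  fixes g :: "'n \<Rightarrow> 'n \<Rightarrow> real^'n \<Rightarrow> real"
    and l :: "'n \<Rightarrow> real^'n \<Rightarrow> real"
    and l2 :: "real^'n \<Rightarrow> real"
  assumes null_data: "null_data S g l l2"
    and ring_connection: "ring_connection S g l l2 Gam"
begin

abbreviation "A y \<equiv> Amat g l l2 y"
abbreviation "Ainv y \<equiv> matrix_inv (Amat g l l2 y)"
abbreviation "n \<equiv> nv g l l2"
abbreviation "P \<equiv> Pm g l l2"
abbreviation "U \<equiv> Uf g l l2"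
abbreviation "s \<equiv> sv g l l2"
abbreviation "trU \<equiv> trPU g l l2"

lemma g_sym: "g a b y = g b a y"
  and g_sym_fun: "g a b = g b a"
  and smooth_g [simp]: "smooth_on S (g a b)"
  and smooth_l [simp]: "smooth_on S (l a)"
  and smooth_l2 [simp]: "smooth_on S l2"
  and invertible_A: "y \<in> S \<Longrightarrow> invertible (A y)"
  and Ainv_None_None: "y \<in> S \<Longrightarrow> Ainv y $ None $ None = 0"
  using null_data unfolding null_data_def metric_hypersurface_data_def n2_def by (auto simp: fun_eq_iff)

lemma pd_g_eq:
  "y \<in> S \<Longrightarrow> pd c (g a b) y - (\<Sum>d\<in>UNIV. Gam d c a y * g d b y + Gam d c b y * g a d y)
     = - U c a y * l b y - U c b y * l a y"
  and pd_l_eq: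
  "y \<in> S \<Longrightarrow> (pd c (l a) y - (\<Sum>d\<in>UNIV. Gam d c a y * l d y)) + (pd a (l c) y - (\<Sum>d\<in>UNIV. Gam d a c y * l d y))
     = - 2 * l2 y * U c a y"
  using ring_connection unfolding ring_connection_def by blast+

lemma A_components [simp]:
  "A y $ Some a $ Some b = g a b y" "A y $ Some a $ None = l a y"
  "A y $ None $ Some b = l b y" "A y $ None $ None = l2 y"
  by (simp_all add: Amat_def)

lemma A_component_funs:
  "(\<lambda>z. A z $ Some a $ Some b) = g a b" "(\<lambda>z. A z $ Some a $ None) = l a"
  "(\<lambda>z. A z $ None $ Some b) = l b" "(\<lambda>z. A z $ None $ None) = l2"
  by (simp_all add: fun_eq_iff)

lemma smooth_A [simp]: "smooth_on S (\<lambda>y. A y $ i $ j)"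
  by (cases i; cases j) simp_all

lemma Ainv_components [simp]:
  "Ainv y $ Some a $ Some b = P a b y" "Ainv y $ Some a $ None = n a y"
  by (simp_all add: Pm_def nv_def)

lemma Ainv_sym: "y \<in> S \<Longrightarrow> Ainv y $ i $ j = Ainv y $ j $ i"
proof -
  assume y: "y \<in> S"
  have "transpose (A y) $ i $ j = A y $ i $ j" for i j
    by (cases i; cases j) (simp_all add: g_sym transpose_def)
  then have "transpose (Ainv y) = Ainv y"
    by (intro transpose_matrix_inv_symmetric[OF invertible_A[OF y]]) (simp add: vec_eq_iff)
  moreover have "Ainv y $ i $ j = transpose (Ainv y) $ j $ i"
    by (simp add: transpose_def)
  ultimately show ?thesis by simp
qed

lemma Ainv_None_Some: "y \<in> S \<Longrightarrow> Ainv y $ None $ Some a = n a y"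
  using Ainv_sym[of y None "Some a"] by simp

lemma smooth_Ainv [simp]: "smooth_on S (\<lambda>y. Ainv y $ i $ j)"
  by (rule smooth_on_matrix_inv[OF open_S smooth_A invertible_A])

lemma smooth_n [simp]: "smooth_on S (n a)"
  using smooth_Ainv[of "Some a" None] by simp

lemma smooth_P [simp]: "smooth_on S (P a b)"
  using smooth_Ainv[of "Some a" "Some b"] by simp

lemma P_sym: "y \<in> S \<Longrightarrow> P a b y = P b a y"
  using Ainv_sym[of y "Some a" "Some b"] by simp

lemma gamma_n: "y \<in> S \<Longrightarrow> (\<Sum>b\<in>UNIV. g a b y * n b y) = 0"
proof -
  assume y: "y \<in> S"
  have "(A y ** Ainv y) $ Some a $ None = 0"
    using matrix_inv_right[OF invertible_A[OF y]] by (simp add: mat_def)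
  then show ?thesis
    unfolding matrix_matrix_mult_component sum_UNIV_option using Ainv_None_None[OF y] by simp
qed

lemma l_n: "y \<in> S \<Longrightarrow> (\<Sum>b\<in>UNIV. l b y * n b y) = 1"
proof -
  assume y: "y \<in> S"
  have "(A y ** Ainv y) $ None $ None = 1"
    using matrix_inv_right[OF invertible_A[OF y]] by (simp add: mat_def)
  then show ?thesis
    unfolding matrix_matrix_mult_component sum_UNIV_option using Ainv_None_None[OF y] by simp
qed

lemma P_l: "y \<in> S \<Longrightarrow> (\<Sum>b\<in>UNIV. P a b y * l b y) = - l2 y * n a y"
proof -
  assume y: "y \<in> S"
  have "(Ainv y ** A y) $ Some a $ None = 0"
    using matrix_inv_left[OF invertible_A[OF y]] by (simp add: mat_def)
  then show ?thesis
    unfolding matrix_matrix_mult_component sum_UNIV_option by (simp add: algebra_simps)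
qed

lemma P_gamma: "y \<in> S \<Longrightarrow> (\<Sum>b\<in>UNIV. P a b y * g b c y) = (if a = c then 1 else 0) - n a y * l c y"
proof -
  assume y: "y \<in> S"
  have "(Ainv y ** A y) $ Some a $ Some c = (if a = c then 1 else 0)"
    using matrix_inv_left[OF invertible_A[OF y]] by (simp add: mat_def)
  then show ?thesis
    unfolding matrix_matrix_mult_component sum_UNIV_option by (simp add: algebra_simps)
qed

lemma smooth_U [simp]: "smooth_on S (U a b)"
  unfolding Uf_def[abs_def] by simp

lemma smooth_s [simp]: "smooth_on S (s b)"
  unfolding sv_def[abs_def] Fm_def by simp

lemma U_sym: "U a b y = U b a y"
  unfolding Uf_def by (simp add: g_sym g_sym_fun[of a b] add_ac)

lemma U_sym_fun: "U a b = U b a"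
  by (simp add: fun_eq_iff U_sym)

lemma two_s: "2 * s b y = (\<Sum>d\<in>UNIV. pd d (l b) y * n d y) - (\<Sum>d\<in>UNIV. pd b (l d) y * n d y)"
proof -
  have "2 * (n a y * Fm l a b y) = pd a (l b) y * n a y - pd b (l a) y * n a y" for a
    by (simp add: Fm_def field_simps)
  then show ?thesis unfolding sv_def by (simp add: sum_distrib_left sum_subtractf[symmetric])
qed

lemma s_n: "(\<Sum>b\<in>UNIV. n b y * s b y) = 0"
proof -
  have "(\<Sum>b\<in>UNIV. n b y * s b y) = (\<Sum>a\<in>UNIV. \<Sum>b\<in>UNIV. n a y * n b y * Fm l a b y)"
    by (subst sum.swap) (simp add: sv_def sum_distrib_left mult.commute mult.left_commute)
  also have "\<dots> = 0"
    by (rule sum_sum_antisymmetric_eq_0) (simp add: Fm_def field_simps)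
  finally show ?thesis .
qed

lemma pd_gamma_n: "y \<in> S \<Longrightarrow> (\<Sum>b\<in>UNIV. pd c (g a b) y * n b y) = - (\<Sum>b\<in>UNIV. g a b y * pd c (n b) y)"
  by (rule sum_pd_mult_eq_if_constant_on[OF open_S]) (simp_all add: gamma_n)

lemma pd_l_n: "y \<in> S \<Longrightarrow> (\<Sum>b\<in>UNIV. pd c (l b) y * n b y) = - (\<Sum>b\<in>UNIV. l b y * pd c (n b) y)"
  by (rule sum_pd_mult_eq_if_constant_on[OF open_S]) (simp_all add: l_n)

lemma pd_n_s: "y \<in> S \<Longrightarrow> (\<Sum>b\<in>UNIV. pd c (n b) y * s b y) = - (\<Sum>b\<in>UNIV. n b y * pd c (s b) y)"
  by (rule sum_pd_mult_eq_if_constant_on[OF open_S]) (simp_all add: s_n)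

lemma U_n: "y \<in> S \<Longrightarrow> (\<Sum>b\<in>UNIV. U a b y * n b y) = 0"
proof -
  assume y: "y \<in> S"
  have "2 * (U a b y * n b y) = (\<Sum>c\<in>UNIV. n c y * pd c (g a b) y * n b y)
     + (\<Sum>c\<in>UNIV. g c b y * pd a (n c) y * n b y) + (\<Sum>c\<in>UNIV. g a c y * pd b (n c) y * n b y)" for b
    unfolding Uf_def by (simp add: sum_distrib_right sum.distrib ring_distribs)
      (simp add: sum_distrib_right[symmetric])
  then have "2 * (\<Sum>b\<in>UNIV. U a b y * n b y) =
      (\<Sum>b\<in>UNIV. \<Sum>c\<in>UNIV. n c y * pd c (g a b) y * n b y)
    + (\<Sum>b\<in>UNIV. \<Sum>c\<in>UNIV. g c b y * pd a (n c) y * n b y)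
    + (\<Sum>b\<in>UNIV. \<Sum>c\<in>UNIV. g a c y * pd b (n c) y * n b y)"
    by (simp add: sum_distrib_left sum.distrib)
  also have "(\<Sum>b\<in>UNIV. \<Sum>c\<in>UNIV. n c y * pd c (g a b) y * n b y)
      = (\<Sum>c\<in>UNIV. n c y * (\<Sum>b\<in>UNIV. pd c (g a b) y * n b y))"
    by (subst sum.swap) (simp add: sum_distrib_left mult.assoc)
  also have "\<dots> = - (\<Sum>c\<in>UNIV. \<Sum>b\<in>UNIV. n c y * g a b y * pd c (n b) y)"
    using pd_gamma_n[OF y] by (simp add: sum_distrib_left sum_negf[symmetric] mult.assoc)
  also have "(\<Sum>b\<in>UNIV. \<Sum>c\<in>UNIV. g c b y * pd a (n c) y * n b y)
      = (\<Sum>c\<in>UNIV. pd a (n c) y * (\<Sum>b\<in>UNIV. g c b y * n b y))"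
    by (subst sum.swap) (simp add: sum_distrib_left mult.commute mult.left_commute)
  also have "\<dots> = 0" using gamma_n[OF y] by simp
  also have "(\<Sum>b\<in>UNIV. \<Sum>c\<in>UNIV. g a c y * pd b (n c) y * n b y)
      = (\<Sum>c\<in>UNIV. \<Sum>b\<in>UNIV. n c y * g a b y * pd c (n b) y)"
    by (simp add: mult.commute mult.left_commute)
  finally show ?thesis by simp
qed

lemma pd_U_n: "y \<in> S \<Longrightarrow> (\<Sum>b\<in>UNIV. pd c (U a b) y * n b y) = - (\<Sum>b\<in>UNIV. U a b y * pd c (n b) y)"
  by (rule sum_pd_mult_eq_if_constant_on[OF open_S]) (simp_all add: U_n)

definition Gam_gamma :: "'n \<Rightarrow> 'n \<Rightarrow> 'n \<Rightarrow> real^'n \<Rightarrow> real" where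
  "Gam_gamma a c d y = (\<Sum>b\<in>UNIV. g a b y * Gam b c d y)"

definition Gam_l :: "'n \<Rightarrow> 'n \<Rightarrow> real^'n \<Rightarrow> real" where
  "Gam_l c d y = (\<Sum>b\<in>UNIV. l b y * Gam b c d y)"

lemma pd_g_eq_Gam_gamma:
  "y \<in> S \<Longrightarrow> pd c (g a b) y = Gam_gamma b c a y + Gam_gamma a c b y - U c a y * l b y - U c b y * l a y"
  using pd_g_eq[of y c a b] unfolding Gam_gamma_def
  by (simp add: sum.distrib g_sym[of _ b] mult.commute)

lemma Gam_gamma_sym: "y \<in> S \<Longrightarrow> Gam_gamma a c d y = Gam_gamma a d c y"
  unfolding Gam_gamma_def using Gam_sym by simp

text \<open>Koszul's formula, with the correction terms coming from \<open>\<nabla>\<gamma> \<noteq> 0\<close>.\<close>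

lemma Gam_gamma_Koszul:
  "y \<in> S \<Longrightarrow> Gam_gamma a c d y = (pd c (g a d) y + pd d (g a c) y - pd a (g c d) y) / 2 + U c d y * l a y"
  using pd_g_eq_Gam_gamma[of y c a d] pd_g_eq_Gam_gamma[of y d a c] pd_g_eq_Gam_gamma[of y a c d]
    Gam_gamma_sym[of y c d a] Gam_gamma_sym[of y a d c] Gam_gamma_sym[of y d a c]
    U_sym[of c a y] U_sym[of d a y] U_sym[of d c y]
  by (simp add: field_simps)

lemma Gam_l_eq: "y \<in> S \<Longrightarrow> Gam_l c d y = (pd c (l d) y + pd d (l c) y) / 2 + l2 y * U c d y"
  using pd_l_eq[of y c d] Gam_sym[of y _ c d] unfolding Gam_l_def
  by (simp add: field_simps mult.commute)

lemma sum_P_gamma_mult: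
  "y \<in> S \<Longrightarrow> (\<Sum>d\<in>UNIV. (\<Sum>a\<in>UNIV. P c a y * g a d y) * w d) = w c - n c y * (\<Sum>d\<in>UNIV. l d y * w d)"
proof -
  assume y: "y \<in> S"
  have "((if c = d then 1 else 0) - n c y * l d y) * w d = (if c = d then w d else 0) - n c y * (l d y * w d)"
    for d by (simp add: algebra_simps)
  then show ?thesis by (simp add: P_gamma[OF y] sum_subtractf sum_distrib_left)
qed

lemma Gam_eq_P_Gam_gamma: "y \<in> S \<Longrightarrow> Gam f c d y = (\<Sum>a\<in>UNIV. P f a y * Gam_gamma a c d y) + n f y * Gam_l c d y"
proof -
  assume y: "y \<in> S"
  have "(\<Sum>a\<in>UNIV. P f a y * Gam_gamma a c d y) = (\<Sum>b\<in>UNIV. (\<Sum>a\<in>UNIV. P f a y * g a b y) * Gam b c d y)"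
    unfolding Gam_gamma_def by (simp add: sum_distrib_left sum_distrib_right mult.assoc) (rule sum.swap)
  then show ?thesis
    unfolding sum_P_gamma_mult[OF y] Gam_l_def by simp
qed

lemma two_Gam_eq: "y \<in> S \<Longrightarrow> 2 * Gam f c d y =
   (\<Sum>a\<in>UNIV. P f a y * (pd c (g a d) y + pd d (g a c) y - pd a (g c d) y))
   + n f y * (pd c (l d) y + pd d (l c) y)"
proof -
  assume y: "y \<in> S"
  have "(\<Sum>a\<in>UNIV. P f a y * Gam_gamma a c d y) =
     (\<Sum>a\<in>UNIV. P f a y * (pd c (g a d) y + pd d (g a c) y - pd a (g c d) y)) / 2
     + U c d y * (\<Sum>a\<in>UNIV. P f a y * l a y)"
    using Gam_gamma_Koszul[OF y]
    by (simp add: ring_distribs sum.distrib sum_divide_distrib sum_distrib_left mult_ac)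
  then show ?thesis
    using Gam_eq_P_Gam_gamma[OF y, of f c d] Gam_l_eq[OF y, of c d] P_l[OF y, of f]
    by (simp add: algebra_simps)
qed

lemma sum_P_pd_gamma_n: "y \<in> S \<Longrightarrow>
    (\<Sum>d\<in>UNIV. \<Sum>a\<in>UNIV. P c a y * pd b (g a d) y * n d y) = - pd b (n c) y - n c y * (\<Sum>d\<in>UNIV. pd b (l d) y * n d y)"
proof -
  assume y: "y \<in> S"
  have "(\<Sum>d\<in>UNIV. \<Sum>a\<in>UNIV. P c a y * pd b (g a d) y * n d y)
      = (\<Sum>a\<in>UNIV. P c a y * (\<Sum>d\<in>UNIV. pd b (g a d) y * n d y))"
    by (subst sum.swap) (simp add: sum_distrib_left mult.assoc)
  also have "\<dots> = - (\<Sum>d\<in>UNIV. (\<Sum>a\<in>UNIV. P c a y * g a d y) * pd b (n d) y)"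
    using pd_gamma_n[OF y]
    by (simp add: sum_distrib_left sum_distrib_right sum_negf mult.assoc) (rule sum.swap)
  finally show ?thesis
    unfolding sum_P_gamma_mult[OF y] pd_l_n[OF y] by simp
qed

lemma two_sum_Gam_n: "y \<in> S \<Longrightarrow> 2 * (\<Sum>d\<in>UNIV. Gam c b d y * n d y) =
    - pd b (n c) y + n c y * (\<Sum>d\<in>UNIV. pd d (l b) y * n d y)
    + (\<Sum>d\<in>UNIV. \<Sum>a\<in>UNIV. P c a y * pd d (g a b) y * n d y)
    + (\<Sum>a\<in>UNIV. \<Sum>d\<in>UNIV. P c a y * g b d y * pd a (n d) y)"
proof -
  assume y: "y \<in> S"
  have "2 * (\<Sum>d\<in>UNIV. Gam c b d y * n d y) = (\<Sum>d\<in>UNIV. (2 * Gam c b d y) * n d y)"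
    by (simp add: sum_distrib_left mult.assoc)
  also have "\<dots> = (\<Sum>d\<in>UNIV. \<Sum>a\<in>UNIV. P c a y * pd b (g a d) y * n d y)
    + (\<Sum>d\<in>UNIV. \<Sum>a\<in>UNIV. P c a y * pd d (g a b) y * n d y)
    - (\<Sum>d\<in>UNIV. \<Sum>a\<in>UNIV. P c a y * pd a (g b d) y * n d y)
    + n c y * (\<Sum>d\<in>UNIV. pd b (l d) y * n d y) + n c y * (\<Sum>d\<in>UNIV. pd d (l b) y * n d y)"
    unfolding two_Gam_eq[OF y]
    by (simp add: algebra_simps sum.distrib sum_subtractf sum_distrib_left sum_distrib_right)
  also have "(\<Sum>d\<in>UNIV. \<Sum>a\<in>UNIV. P c a y * pd a (g b d) y * n d y)
      = - (\<Sum>a\<in>UNIV. \<Sum>d\<in>UNIV. P c a y * g b d y * pd a (n d) y)"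
  proof -
    have "(\<Sum>d\<in>UNIV. \<Sum>a\<in>UNIV. P c a y * pd a (g b d) y * n d y)
        = (\<Sum>a\<in>UNIV. P c a y * (\<Sum>d\<in>UNIV. pd a (g b d) y * n d y))"
      by (subst sum.swap) (simp add: sum_distrib_left mult.assoc)
    then show ?thesis
      by (simp add: pd_gamma_n[OF y] sum_distrib_left sum_negf mult.assoc)
  qed
  finally show ?thesis
    unfolding sum_P_pd_gamma_n[OF y] by simp
qed

lemma two_sum_P_U: "y \<in> S \<Longrightarrow> 2 * (\<Sum>f\<in>UNIV. P c f y * U b f y) =
    (\<Sum>d\<in>UNIV. \<Sum>a\<in>UNIV. P c a y * pd d (g a b) y * n d y)
    + pd b (n c) y + n c y * (\<Sum>d\<in>UNIV. pd b (l d) y * n d y)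
    + (\<Sum>a\<in>UNIV. \<Sum>d\<in>UNIV. P c a y * g b d y * pd a (n d) y)"
proof -
  assume y: "y \<in> S"
  have "2 * (P c f y * U b f y) = (\<Sum>d\<in>UNIV. P c f y * n d y * pd d (g b f) y)
      + (\<Sum>d\<in>UNIV. P c f y * g d f y * pd b (n d) y) + (\<Sum>d\<in>UNIV. P c f y * g b d y * pd f (n d) y)" for f
    unfolding Uf_def by (simp add: sum_distrib_left sum.distrib ring_distribs mult.assoc)
      (simp add: sum_distrib_left[symmetric] mult.commute)
  then have "2 * (\<Sum>f\<in>UNIV. P c f y * U b f y) = (\<Sum>f\<in>UNIV. \<Sum>d\<in>UNIV. P c f y * n d y * pd d (g b f) y)
      + (\<Sum>f\<in>UNIV. \<Sum>d\<in>UNIV. P c f y * g d f y * pd b (n d) y)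
      + (\<Sum>f\<in>UNIV. \<Sum>d\<in>UNIV. P c f y * g b d y * pd f (n d) y)"
    by (simp add: sum_distrib_left sum.distrib)
  also have "(\<Sum>f\<in>UNIV. \<Sum>d\<in>UNIV. P c f y * g d f y * pd b (n d) y)
      = (\<Sum>d\<in>UNIV. (\<Sum>f\<in>UNIV. P c f y * g f d y) * pd b (n d) y)"
    by (subst sum.swap) (simp add: sum_distrib_right g_sym)
  also have "(\<Sum>f\<in>UNIV. \<Sum>d\<in>UNIV. P c f y * n d y * pd d (g b f) y)
      = (\<Sum>d\<in>UNIV. \<Sum>a\<in>UNIV. P c a y * pd d (g a b) y * n d y)"
    by (subst sum.swap) (simp add: g_sym_fun[of b] mult.commute mult.left_commute)
  finally show ?thesis
    unfolding sum_P_gamma_mult[OF y] pd_l_n[OF y] by simp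
qed

lemma cov_deriv_n: "y \<in> S \<Longrightarrow> cov_deriv Gam n c b y = s b y * n c y + (\<Sum>f\<in>UNIV. P c f y * U b f y)"
proof -
  assume y: "y \<in> S"
  have "2 * (s b y * n c y) = n c y * (\<Sum>d\<in>UNIV. pd d (l b) y * n d y) - n c y * (\<Sum>d\<in>UNIV. pd b (l d) y * n d y)"
    using arg_cong[OF two_s[of b y], of "\<lambda>t. t * n c y"] by (simp add: algebra_simps)
  then show ?thesis
    using two_sum_Gam_n[OF y, of c b] two_sum_P_U[OF y, of c b] unfolding cov_deriv_def by linarith
qed

lemma log_det_pd_A: "y \<in> S \<Longrightarrow> log_det_pd A e y =
    (\<Sum>c\<in>UNIV. \<Sum>a\<in>UNIV. P c a y * pd e (g a c) y) + 2 * (\<Sum>c\<in>UNIV. n c y * pd e (l c) y)"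
  unfolding log_det_pd_def
  by (simp add: sum_UNIV_option Ainv_None_Some Ainv_None_None A_component_funs sum.distrib)

lemma sum_Gam_trace: "y \<in> S \<Longrightarrow> (\<Sum>c\<in>UNIV. Gam c c e y) = log_det_pd A e y / 2 + s e y"
proof -
  assume y: "y \<in> S"
  have "2 * (\<Sum>c\<in>UNIV. Gam c c e y) = (\<Sum>c\<in>UNIV. \<Sum>a\<in>UNIV. P c a y * pd c (g a e) y)
     + (\<Sum>c\<in>UNIV. \<Sum>a\<in>UNIV. P c a y * pd e (g a c) y)
     - (\<Sum>c\<in>UNIV. \<Sum>a\<in>UNIV. P c a y * pd a (g c e) y)
     + (\<Sum>c\<in>UNIV. pd c (l e) y * n c y) + (\<Sum>c\<in>UNIV. n c y * pd e (l c) y)"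
    by (simp add: sum_distrib_left two_Gam_eq[OF y] algebra_simps sum.distrib sum_subtractf)
  moreover have "(\<Sum>c\<in>UNIV. \<Sum>a\<in>UNIV. P c a y * pd a (g c e) y)
      = (\<Sum>c\<in>UNIV. \<Sum>a\<in>UNIV. P c a y * pd c (g a e) y)"
    by (subst sum.swap) (simp add: P_sym[OF y])
  moreover have "(\<Sum>c\<in>UNIV. pd e (l c) y * n c y) = (\<Sum>c\<in>UNIV. n c y * pd e (l c) y)"
    by (simp add: mult.commute)
  ultimately show ?thesis
    using two_s[of e y] log_det_pd_A[OF y, of e] by linarith
qed

lemma pd_P: "y \<in> S \<Longrightarrow> pd e (P a b) y =
   - (n a y * pd e l2 y * n b y + n a y * (\<Sum>d\<in>UNIV. pd e (l d) y * P d b y)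
      + (\<Sum>c\<in>UNIV. P a c y * pd e (l c) y) * n b y
      + (\<Sum>c\<in>UNIV. \<Sum>d\<in>UNIV. P a c y * pd e (g c d) y * P d b y))"
proof -
  assume y: "y \<in> S"
  have "P a b = (\<lambda>z. Ainv z $ Some a $ Some b)"
    by (simp add: fun_eq_iff)
  then have "pd e (P a b) y = pd e (\<lambda>z. Ainv z $ Some a $ Some b) y"
    by simp
  also have "\<dots> = - (\<Sum>k\<in>UNIV. \<Sum>j\<in>UNIV. Ainv y $ Some a $ k * pd e (\<lambda>z. A z $ k $ j) y * Ainv y $ j $ Some b)"
    by (rule pd_matrix_inv[OF open_S y smooth_A invertible_A])
  finally show ?thesis
    by (simp add: sum_UNIV_option Ainv_None_Some[OF y] A_component_funs sum.distrib
        sum_distrib_left sum_distrib_right algebra_simps)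
qed

lemma sum_pd_P: "y \<in> S \<Longrightarrow> (\<Sum>c\<in>UNIV. pd c (P c f) y) =
    - n f y * (\<Sum>c\<in>UNIV. n c y * pd c l2 y) - (\<Sum>c\<in>UNIV. n c y * (\<Sum>d\<in>UNIV. pd c (l d) y * P d f y))
    - n f y * (\<Sum>c\<in>UNIV. \<Sum>d\<in>UNIV. pd c (l d) y * P c d y)
    - (\<Sum>c\<in>UNIV. \<Sum>d\<in>UNIV. \<Sum>a\<in>UNIV. P f a y * pd c (g a d) y * P c d y)"
proof -
  assume y: "y \<in> S"
  have "(\<Sum>c\<in>UNIV. \<Sum>b\<in>UNIV. \<Sum>d\<in>UNIV. P c b y * pd c (g b d) y * P d f y)
      = (\<Sum>c\<in>UNIV. \<Sum>d\<in>UNIV. \<Sum>a\<in>UNIV. P f a y * pd c (g a d) y * P c d y)"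
    using P_sym[OF y, of _ f] g_sym_fun by (intro sum.cong refl) (simp add: mult_ac)
  moreover have "(\<Sum>c\<in>UNIV. (\<Sum>b\<in>UNIV. P c b y * pd c (l b) y) * n f y)
      = n f y * (\<Sum>c\<in>UNIV. \<Sum>d\<in>UNIV. pd c (l d) y * P c d y)"
    by (simp add: sum_distrib_left sum_distrib_right mult_ac)
  moreover have "(\<Sum>c\<in>UNIV. n c y * pd c l2 y * n f y) = n f y * (\<Sum>c\<in>UNIV. n c y * pd c l2 y)"
    by (simp add: sum_distrib_left mult_ac)
  ultimately show ?thesis
    unfolding pd_P[OF y] sum_negf sum.distrib by linarith
qed

lemma two_sum_Gam_P: "y \<in> S \<Longrightarrow> 2 * (\<Sum>c\<in>UNIV. \<Sum>d\<in>UNIV. Gam f c d y * P c d y) =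
    2 * (\<Sum>c\<in>UNIV. \<Sum>d\<in>UNIV. \<Sum>a\<in>UNIV. P f a y * pd c (g a d) y * P c d y)
  - (\<Sum>c\<in>UNIV. \<Sum>d\<in>UNIV. \<Sum>a\<in>UNIV. P f a y * pd a (g c d) y * P c d y)
  + 2 * n f y * (\<Sum>c\<in>UNIV. \<Sum>d\<in>UNIV. pd c (l d) y * P c d y)"
proof -
  assume y: "y \<in> S"
  have "2 * (\<Sum>c\<in>UNIV. \<Sum>d\<in>UNIV. Gam f c d y * P c d y) =
       (\<Sum>c\<in>UNIV. \<Sum>d\<in>UNIV. \<Sum>a\<in>UNIV. P f a y * pd c (g a d) y * P c d y)
     + (\<Sum>c\<in>UNIV. \<Sum>d\<in>UNIV. \<Sum>a\<in>UNIV. P f a y * pd d (g a c) y * P c d y)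
     - (\<Sum>c\<in>UNIV. \<Sum>d\<in>UNIV. \<Sum>a\<in>UNIV. P f a y * pd a (g c d) y * P c d y)
     + n f y * (\<Sum>c\<in>UNIV. \<Sum>d\<in>UNIV. pd c (l d) y * P c d y)
     + n f y * (\<Sum>c\<in>UNIV. \<Sum>d\<in>UNIV. pd d (l c) y * P c d y)"
    by (simp add: sum_distrib_left mult.assoc[symmetric] two_Gam_eq[OF y])
      (simp add: algebra_simps sum.distrib sum_subtractf sum_distrib_left sum_distrib_right)
  moreover have "(\<Sum>c\<in>UNIV. \<Sum>d\<in>UNIV. \<Sum>a\<in>UNIV. P f a y * pd d (g a c) y * P c d y)
      = (\<Sum>c\<in>UNIV. \<Sum>d\<in>UNIV. \<Sum>a\<in>UNIV. P f a y * pd c (g a d) y * P c d y)"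
    by (subst sum.swap) (simp add: P_sym[OF y])
  moreover have "(\<Sum>c\<in>UNIV. \<Sum>d\<in>UNIV. pd d (l c) y * P c d y) = (\<Sum>c\<in>UNIV. \<Sum>d\<in>UNIV. pd c (l d) y * P c d y)"
    by (subst sum.swap) (simp add: P_sym[OF y])
  ultimately show ?thesis by (simp add: algebra_simps)
qed

lemma two_sum_Gam_trace_P: "y \<in> S \<Longrightarrow> 2 * (\<Sum>e\<in>UNIV. (\<Sum>c\<in>UNIV. Gam c c e y) * P e f y) =
    (\<Sum>c\<in>UNIV. \<Sum>d\<in>UNIV. \<Sum>a\<in>UNIV. P f a y * pd a (g c d) y * P c d y)
  + 2 * (\<Sum>e\<in>UNIV. (\<Sum>c\<in>UNIV. n c y * pd e (l c) y) * P e f y) + 2 * (\<Sum>e\<in>UNIV. P f e y * s e y)"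
proof -
  assume y: "y \<in> S"
  have "2 * ((\<Sum>c\<in>UNIV. Gam c c e y) * P e f y) = (\<Sum>c\<in>UNIV. \<Sum>a\<in>UNIV. P c a y * pd e (g a c) y) * P e f y
      + 2 * ((\<Sum>c\<in>UNIV. n c y * pd e (l c) y) * P e f y) + 2 * (s e y * P e f y)" for e
    by (simp add: sum_Gam_trace[OF y] log_det_pd_A[OF y] field_simps)
  then have "2 * (\<Sum>e\<in>UNIV. (\<Sum>c\<in>UNIV. Gam c c e y) * P e f y)
      = (\<Sum>e\<in>UNIV. (\<Sum>c\<in>UNIV. \<Sum>a\<in>UNIV. P c a y * pd e (g a c) y) * P e f y)
      + 2 * (\<Sum>e\<in>UNIV. (\<Sum>c\<in>UNIV. n c y * pd e (l c) y) * P e f y) + 2 * (\<Sum>e\<in>UNIV. s e y * P e f y)"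
    by (simp add: sum_distrib_left sum.distrib)
  also have "(\<Sum>e\<in>UNIV. (\<Sum>c\<in>UNIV. \<Sum>a\<in>UNIV. P c a y * pd e (g a c) y) * P e f y)
      = (\<Sum>c\<in>UNIV. \<Sum>a\<in>UNIV. \<Sum>e\<in>UNIV. P c a y * pd e (g a c) y * P e f y)"
    by (simp add: sum_distrib_right) (subst sum.swap, rule sum.cong[OF refl], rule sum.swap)
  also have "\<dots> = (\<Sum>c\<in>UNIV. \<Sum>d\<in>UNIV. \<Sum>a\<in>UNIV. P f a y * pd a (g c d) y * P c d y)"
    using P_sym[OF y, of _ f] g_sym_fun by (intro sum.cong refl) (simp add: mult_ac)
  also have "(\<Sum>e\<in>UNIV. s e y * P e f y) = (\<Sum>e\<in>UNIV. P f e y * s e y)"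
    using P_sym[OF y] by (simp add: mult.commute)
  finally show ?thesis .
qed

lemma two_sum_P_s: "y \<in> S \<Longrightarrow> 2 * (\<Sum>e\<in>UNIV. P f e y * s e y) =
    (\<Sum>c\<in>UNIV. n c y * (\<Sum>d\<in>UNIV. pd c (l d) y * P d f y)) - (\<Sum>e\<in>UNIV. (\<Sum>c\<in>UNIV. n c y * pd e (l c) y) * P e f y)"
proof -
  assume y: "y \<in> S"
  have "2 * (\<Sum>e\<in>UNIV. P f e y * s e y) = (\<Sum>e\<in>UNIV. (2 * s e y) * P e f y)"
    using P_sym[OF y] by (simp add: sum_distrib_left mult_ac)
  also have "\<dots> = (\<Sum>e\<in>UNIV. \<Sum>d\<in>UNIV. pd d (l e) y * n d y * P e f y)
      - (\<Sum>e\<in>UNIV. \<Sum>d\<in>UNIV. pd e (l d) y * n d y * P e f y)"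
    by (simp only: two_s) (simp add: left_diff_distrib sum_subtractf sum_distrib_right)
  also have "(\<Sum>e\<in>UNIV. \<Sum>d\<in>UNIV. pd d (l e) y * n d y * P e f y)
      = (\<Sum>c\<in>UNIV. n c y * (\<Sum>d\<in>UNIV. pd c (l d) y * P d f y))"
    by (subst sum.swap) (simp add: sum_distrib_left mult_ac)
  also have "(\<Sum>e\<in>UNIV. \<Sum>d\<in>UNIV. pd e (l d) y * n d y * P e f y)
      = (\<Sum>e\<in>UNIV. (\<Sum>c\<in>UNIV. n c y * pd e (l c) y) * P e f y)"
    by (simp only: sum_distrib_right) (simp add: mult_ac)
  finally show ?thesis .
qed

lemma div_P: "y \<in> S \<Longrightarrow>
  (\<Sum>c\<in>UNIV. pd c (P c f) y) + (\<Sum>e\<in>UNIV. (\<Sum>c\<in>UNIV. Gam c c e y) * P e f y)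
   + (\<Sum>c\<in>UNIV. \<Sum>d\<in>UNIV. Gam f c d y * P c d y)
  = - (\<Sum>e\<in>UNIV. P f e y * s e y) - n f y * (\<Sum>c\<in>UNIV. n c y * pd c l2 y)"
  using sum_pd_P[of y f] two_sum_Gam_P[of y f] two_sum_Gam_trace_P[of y f] two_sum_P_s[of y f]
  by (simp add: algebra_simps)

lemma trace_cov_deriv_n: "y \<in> S \<Longrightarrow> (\<Sum>c\<in>UNIV. cov_deriv Gam n c c y) = trU y"
  by (simp add: cov_deriv_n sum.distrib mult.commute s_n trPU_def)

lemma cov_div_s_n: "x \<in> S \<Longrightarrow> cov_div Gam (\<lambda>c b y. s b y * n c y) b x
    = lie_n_s g l l2 b x + trU x * s b x - (\<Sum>a\<in>UNIV. \<Sum>f\<in>UNIV. P a f x * U a b x * s f x)"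
proof -
  assume x: "x \<in> S"
  have "(\<Sum>c\<in>UNIV. \<Sum>e\<in>UNIV. Gam e c b x * (s e x * n c x))
      = (\<Sum>e\<in>UNIV. s e x * (cov_deriv Gam n e b x - pd b (n e) x))"
    unfolding cov_deriv_def using Gam_sym[OF x]
    by (subst sum.swap) (simp add: sum_distrib_left mult_ac)
  also have "\<dots> = (\<Sum>a\<in>UNIV. \<Sum>f\<in>UNIV. P a f x * U a b x * s f x) - (\<Sum>e\<in>UNIV. s e x * pd b (n e) x)"
    using s_n[of x] P_sym[OF x] U_sym sum_distrib_left[of "s b x" "\<lambda>e. n e x * s e x" UNIV]
    by (simp add: cov_deriv_n[OF x] right_diff_distrib sum_subtractf ring_distribs sum.distrib
        sum_distrib_left mult_ac flip: sum_distrib_right) (subst sum.swap, simp add: mult_ac)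
  finally have "(\<Sum>c\<in>UNIV. \<Sum>e\<in>UNIV. Gam e c b x * (s e x * n c x))
      = (\<Sum>a\<in>UNIV. \<Sum>f\<in>UNIV. P a f x * U a b x * s f x) - (\<Sum>e\<in>UNIV. s e x * pd b (n e) x)" .
  moreover have "(\<Sum>c\<in>UNIV. pd c (\<lambda>y. s b y * n c y) x + (\<Sum>e\<in>UNIV. Gam c c e x * (s b x * n e x)))
      = (\<Sum>c\<in>UNIV. n c x * pd c (s b) x) + s b x * (\<Sum>c\<in>UNIV. cov_deriv Gam n c c x)"
    unfolding cov_deriv_def using x
    by (simp add: pd_mult sum.distrib sum_distrib_left ring_distribs mult_ac)
  ultimately show ?thesis
    unfolding cov_div_def lie_n_s_def trace_cov_deriv_n[OF x] sum_subtractf sum.distrib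
    by (simp add: mult.commute)
qed

lemma cov_div_P_U_expand: "x \<in> S \<Longrightarrow> cov_div Gam (\<lambda>c b y. \<Sum>f\<in>UNIV. P c f y * U b f y) b x
    = (\<Sum>f\<in>UNIV. ((\<Sum>c\<in>UNIV. pd c (P c f) x) + (\<Sum>e\<in>UNIV. (\<Sum>c\<in>UNIV. Gam c c e x) * P e f x)
         + (\<Sum>c\<in>UNIV. \<Sum>d\<in>UNIV. Gam f c d x * P c d x)) * U b f x)
      + (\<Sum>c\<in>UNIV. \<Sum>f\<in>UNIV. P c f x * nablaU g l l2 Gam c b f x)"
proof -
  assume x: "x \<in> S"
  have "cov_div Gam (\<lambda>c b y. \<Sum>f\<in>UNIV. P c f y * U b f y) b x
      = (\<Sum>c\<in>UNIV. \<Sum>f\<in>UNIV. pd c (P c f) x * U b f x) + (\<Sum>c\<in>UNIV. \<Sum>f\<in>UNIV. P c f x * pd c (U b f) x)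
      + (\<Sum>c\<in>UNIV. \<Sum>e\<in>UNIV. \<Sum>f\<in>UNIV. Gam c c e x * P e f x * U b f x)
      - (\<Sum>c\<in>UNIV. \<Sum>e\<in>UNIV. \<Sum>f\<in>UNIV. Gam e c b x * P c f x * U e f x)"
    unfolding cov_div_def using x
    by (simp add: pd_rules sum.distrib sum_subtractf sum_distrib_left mult.assoc)
  moreover have "(\<Sum>c\<in>UNIV. \<Sum>f\<in>UNIV. P c f x * nablaU g l l2 Gam c b f x)
      = (\<Sum>c\<in>UNIV. \<Sum>f\<in>UNIV. P c f x * pd c (U b f) x)
      - (\<Sum>c\<in>UNIV. \<Sum>e\<in>UNIV. \<Sum>f\<in>UNIV. Gam e c b x * P c f x * U e f x)
      - (\<Sum>f\<in>UNIV. (\<Sum>c\<in>UNIV. \<Sum>d\<in>UNIV. Gam f c d x * P c d x) * U b f x)"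
  proof -
    have "(\<Sum>c\<in>UNIV. \<Sum>f\<in>UNIV. \<Sum>d\<in>UNIV. P c f x * (Gam d c b x * U d f x))
        = (\<Sum>c\<in>UNIV. \<Sum>e\<in>UNIV. \<Sum>f\<in>UNIV. Gam e c b x * P c f x * U e f x)"
      by (rule sum.cong[OF refl], subst sum.swap) (simp add: mult_ac)
    moreover have "(\<Sum>c\<in>UNIV. \<Sum>f\<in>UNIV. \<Sum>d\<in>UNIV. P c f x * (Gam d c f x * U b d x))
        = (\<Sum>f\<in>UNIV. (\<Sum>c\<in>UNIV. \<Sum>d\<in>UNIV. Gam f c d x * P c d x) * U b f x)"
    proof -
      have "(\<Sum>f\<in>UNIV. (\<Sum>c\<in>UNIV. \<Sum>d\<in>UNIV. Gam f c d x * P c d x) * U b f x)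
          = (\<Sum>c\<in>UNIV. \<Sum>d\<in>UNIV. \<Sum>f\<in>UNIV. Gam f c d x * P c d x * U b f x)"
        by (simp add: sum_distrib_right) (subst sum.swap, rule sum.cong[OF refl], rule sum.swap)
      then show ?thesis by (simp add: mult_ac)
    qed
    ultimately show ?thesis
      unfolding nablaU_def by (simp add: ring_distribs sum.distrib sum_subtractf sum_distrib_left)
  qed
  moreover have "(\<Sum>c\<in>UNIV. \<Sum>f\<in>UNIV. pd c (P c f) x * U b f x) = (\<Sum>f\<in>UNIV. (\<Sum>c\<in>UNIV. pd c (P c f) x) * U b f x)"
    by (subst sum.swap) (simp add: sum_distrib_right)
  moreover have "(\<Sum>c\<in>UNIV. \<Sum>e\<in>UNIV. \<Sum>f\<in>UNIV. Gam c c e x * P e f x * U b f x)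
      = (\<Sum>f\<in>UNIV. (\<Sum>e\<in>UNIV. (\<Sum>c\<in>UNIV. Gam c c e x) * P e f x) * U b f x)"
    by (simp add: sum_distrib_right, subst sum.swap, subst (2) sum.swap, subst sum.swap, rule refl)
  ultimately show ?thesis
    by (simp add: distrib_right sum.distrib)
qed

lemma cov_div_P_U: "x \<in> S \<Longrightarrow> cov_div Gam (\<lambda>c b y. \<Sum>f\<in>UNIV. P c f y * U b f y) b x
    = - (\<Sum>a\<in>UNIV. \<Sum>f\<in>UNIV. P a f x * U a b x * s f x)
      + (\<Sum>c\<in>UNIV. \<Sum>f\<in>UNIV. P c f x * nablaU g l l2 Gam c b f x)"
proof -
  assume x: "x \<in> S"
  have "(\<Sum>f\<in>UNIV. (- (\<Sum>e\<in>UNIV. P f e x * s e x) - n f x * (\<Sum>c\<in>UNIV. n c x * pd c l2 x)) * U b f x)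
      = - (\<Sum>a\<in>UNIV. \<Sum>f\<in>UNIV. P a f x * U a b x * s f x)
        - (\<Sum>c\<in>UNIV. n c x * pd c l2 x) * (\<Sum>f\<in>UNIV. U b f x * n f x)"
    using U_sym by (simp add: algebra_simps sum.distrib sum_subtractf sum_negf sum_distrib_left sum_distrib_right)
  then show ?thesis
    unfolding cov_div_P_U_expand[OF x] div_P[OF x] U_n[OF x] by simp
qed

lemma Ric_n: "x \<in> S \<Longrightarrow> (\<Sum>a\<in>UNIV. Ric Gam a b x * n a x)
    = lie_n_s g l l2 b x - 2 * (\<Sum>a\<in>UNIV. \<Sum>f\<in>UNIV. P a f x * U a b x * s f x)
      + (\<Sum>c\<in>UNIV. \<Sum>f\<in>UNIV. P c f x * nablaU g l l2 Gam c b f x) - pd b trU x + trU x * s b x"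
proof -
  assume x: "x \<in> S"
  have "cov_div Gam (cov_deriv Gam n) b x
      = cov_div Gam (\<lambda>c b y. s b y * n c y + (\<Sum>f\<in>UNIV. P c f y * U b f y)) b x"
    by (rule cov_div_cong_open[OF x]) (simp add: cov_deriv_n)
  also have "\<dots> = cov_div Gam (\<lambda>c b y. s b y * n c y) b x
      + cov_div Gam (\<lambda>c b y. \<Sum>f\<in>UNIV. P c f y * U b f y) b x"
    by (rule cov_div_add[OF x]) simp_all
  finally have "cov_div Gam (cov_deriv Gam n) b x = \<dots>" .
  moreover have "pd b (\<lambda>y. \<Sum>c\<in>UNIV. cov_deriv Gam n c c y) x = pd b trU x"
    by (rule pd_cong_open[OF open_S x]) (simp add: trace_cov_deriv_n)
  ultimately show ?thesis
    unfolding contracted_Ricci_identity[OF x smooth_n] cov_div_s_n[OF x] cov_div_P_U[OF x] by simp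
qed

lemma Ric_antisym_n: "x \<in> S \<Longrightarrow> Ric Gam a b x - Ric Gam b a x = pd a (s b) x - pd b (s a) x"
proof -
  assume x: "x \<in> S"
  have "pd a (\<lambda>y. \<Sum>c\<in>UNIV. Gam c c b y) x = pd a (\<lambda>y. log_det_pd A b y / 2 + s b y) x" for a b
    by (rule pd_cong_open[OF open_S x]) (simp add: sum_Gam_trace)
  also have "\<dots> a b = pd a (log_det_pd A b) x / 2 + pd a (s b) x" for a b
    using x smooth_on_matrix_inv[OF open_S smooth_A invertible_A]
    by (simp add: pd_rules log_det_pd_def[abs_def])
  finally show ?thesis
    using Ric_antisym[OF x, of a b] pd_log_det_pd_commute[OF open_S x smooth_A invertible_A, of a b]
    by simp
qed

lemma sum_Ric_antisym_n: "x \<in> S \<Longrightarrow> (\<Sum>a\<in>UNIV. (Ric Gam a b x - Ric Gam b a x) * n a x) = lie_n_s g l l2 b x"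
proof -
  assume x: "x \<in> S"
  have "(\<Sum>a\<in>UNIV. (Ric Gam a b x - Ric Gam b a x) * n a x)
      = (\<Sum>a\<in>UNIV. n a x * pd a (s b) x) - (\<Sum>a\<in>UNIV. n a x * pd b (s a) x)"
    by (simp add: Ric_antisym_n[OF x] right_diff_distrib sum_subtractf mult.commute)
  then show ?thesis
    unfolding lie_n_s_def using pd_n_s[OF x, of b] by (simp add: sum.distrib mult.commute)
qed

lemma Ric_sym_n: "x \<in> S \<Longrightarrow> (\<Sum>a\<in>UNIV. (Ric Gam a b x + Ric Gam b a x) / 2 * n a x)
    = lie_n_s g l l2 b x / 2 - 2 * (\<Sum>a\<in>UNIV. \<Sum>f\<in>UNIV. P a f x * U a b x * s f x)
      + (\<Sum>c\<in>UNIV. \<Sum>f\<in>UNIV. P c f x * nablaU g l l2 Gam c b f x) - pd b trU x + trU x * s b x"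
proof -
  assume x: "x \<in> S"
  have "(Ric Gam a b x + Ric Gam b a x) / 2 * n a x
      = Ric Gam a b x * n a x - (Ric Gam a b x - Ric Gam b a x) * n a x / 2" for a
    by (simp add: field_simps)
  then have "(\<Sum>a\<in>UNIV. (Ric Gam a b x + Ric Gam b a x) / 2 * n a x)
      = (\<Sum>a\<in>UNIV. Ric Gam a b x * n a x) - (\<Sum>a\<in>UNIV. (Ric Gam a b x - Ric Gam b a x) * n a x) / 2"
    by (simp only: sum_subtractf sum_divide_distrib)
  then show ?thesis
    using Ric_n[OF x, of b] sum_Ric_antisym_n[OF x, of b] by simp
qed

lemma sum_n_lie_n_s: "x \<in> S \<Longrightarrow> (\<Sum>b\<in>UNIV. n b x * lie_n_s g l l2 b x) = 0"
proof -
  assume x: "x \<in> S"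
  have "(\<Sum>b\<in>UNIV. n b x * lie_n_s g l l2 b x)
      = (\<Sum>c\<in>UNIV. n c x * ((\<Sum>b\<in>UNIV. n b x * pd c (s b) x) + (\<Sum>b\<in>UNIV. pd c (n b) x * s b x)))"
    unfolding lie_n_s_def
    by (simp add: ring_distribs sum.distrib sum_distrib_left mult_ac) (subst sum.swap, simp add: mult_ac)
  then show ?thesis by (simp add: pd_n_s[OF x])
qed

lemma sum_n_P_U_s: "x \<in> S \<Longrightarrow> (\<Sum>b\<in>UNIV. n b x * (\<Sum>a\<in>UNIV. \<Sum>f\<in>UNIV. P a f x * U a b x * s f x)) = 0"
proof -
  assume x: "x \<in> S"
  have "(\<Sum>b\<in>UNIV. n b x * (\<Sum>a\<in>UNIV. \<Sum>f\<in>UNIV. P a f x * U a b x * s f x))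
      = (\<Sum>a\<in>UNIV. \<Sum>f\<in>UNIV. P a f x * s f x * (\<Sum>b\<in>UNIV. U a b x * n b x))"
    by (simp add: sum_distrib_left mult_ac) (subst sum.swap, rule sum.cong[OF refl], subst sum.swap, simp)
  then show ?thesis by (simp add: U_n[OF x])
qed

lemma sum_n_nablaU: "x \<in> S \<Longrightarrow>
    (\<Sum>b\<in>UNIV. n b x * nablaU g l l2 Gam c b f x) = - (\<Sum>d\<in>UNIV. \<Sum>e\<in>UNIV. U d f x * P d e x * U c e x)"
proof -
  assume x: "x \<in> S"
  have "(\<Sum>b\<in>UNIV. n b x * pd c (U b f) x) = - (\<Sum>d\<in>UNIV. U d f x * pd c (n d) x)"
    using pd_U_n[OF x, of c f] by (simp add: U_sym_fun[of f] mult.commute)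
  moreover have "(\<Sum>b\<in>UNIV. n b x * (\<Sum>d\<in>UNIV. Gam d c b x * U d f x))
      = (\<Sum>d\<in>UNIV. U d f x * (\<Sum>b\<in>UNIV. Gam d c b x * n b x))"
    by (simp add: sum_distrib_left mult_ac) (rule sum.swap)
  moreover have "(\<Sum>b\<in>UNIV. n b x * (\<Sum>d\<in>UNIV. Gam d c f x * U b d x)) = 0"
    using U_n[OF x] U_sym
    by (simp add: sum_distrib_left mult_ac) (subst sum.swap, simp add: sum_distrib_left[symmetric])
  ultimately have "(\<Sum>b\<in>UNIV. n b x * nablaU g l l2 Gam c b f x) = - (\<Sum>d\<in>UNIV. U d f x * cov_deriv Gam n d c x)"
    unfolding nablaU_def cov_deriv_def
    by (simp add: ring_distribs sum.distrib sum_subtractf)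
  also have "(\<Sum>d\<in>UNIV. U d f x * cov_deriv Gam n d c x)
      = s c x * (\<Sum>d\<in>UNIV. U f d x * n d x) + (\<Sum>d\<in>UNIV. \<Sum>e\<in>UNIV. U d f x * P d e x * U c e x)"
    by (simp add: cov_deriv_n[OF x] U_sym_fun[of f] ring_distribs sum.distrib sum_distrib_left mult_ac)
  finally show ?thesis by (simp add: U_n[OF x])
qed

lemma sum_n_P_nablaU: "x \<in> S \<Longrightarrow>
    (\<Sum>b\<in>UNIV. n b x * (\<Sum>c\<in>UNIV. \<Sum>f\<in>UNIV. P c f x * nablaU g l l2 Gam c b f x))
      = - (\<Sum>a\<in>UNIV. \<Sum>b\<in>UNIV. \<Sum>c\<in>UNIV. \<Sum>d\<in>UNIV. P a b x * P c d x * U a c x * U b d x)"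
proof -
  assume x: "x \<in> S"
  have "(\<Sum>b\<in>UNIV. n b x * (\<Sum>c\<in>UNIV. \<Sum>f\<in>UNIV. P c f x * nablaU g l l2 Gam c b f x))
      = (\<Sum>c\<in>UNIV. \<Sum>f\<in>UNIV. P c f x * (\<Sum>b\<in>UNIV. n b x * nablaU g l l2 Gam c b f x))"
    by (simp add: sum_distrib_left mult_ac) (subst sum.swap, rule sum.cong[OF refl], subst sum.swap, simp)
  also have "\<dots> = - (\<Sum>c\<in>UNIV. \<Sum>f\<in>UNIV. \<Sum>e\<in>UNIV. \<Sum>d\<in>UNIV. P c f x * (U d f x * P d e x * U c e x))"
    by (simp add: sum_n_nablaU[OF x] sum_distrib_left sum_negf)
      (rule sum.cong[OF refl], rule sum.cong[OF refl], rule sum.swap)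
  also have "\<dots> = - (\<Sum>a\<in>UNIV. \<Sum>b\<in>UNIV. \<Sum>c\<in>UNIV. \<Sum>d\<in>UNIV. P a b x * P c d x * U a c x * U b d x)"
    using P_sym[OF x] U_sym by (simp add: mult_ac)
  finally show ?thesis .
qed

lemma Ric_n_n: "x \<in> S \<Longrightarrow> (\<Sum>a\<in>UNIV. \<Sum>b\<in>UNIV. Ric Gam a b x * n a x * n b x)
    = - (\<Sum>a\<in>UNIV. \<Sum>b\<in>UNIV. \<Sum>c\<in>UNIV. \<Sum>d\<in>UNIV. P a b x * P c d x * U a c x * U b d x)
      - (\<Sum>a\<in>UNIV. n a x * pd a trU x)"
proof -
  assume x: "x \<in> S"
  have "(\<Sum>a\<in>UNIV. \<Sum>b\<in>UNIV. Ric Gam a b x * n a x * n b x)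
      = (\<Sum>b\<in>UNIV. n b x * (\<Sum>a\<in>UNIV. Ric Gam a b x * n a x))"
    by (subst sum.swap) (simp add: sum_distrib_left mult_ac)
  also have "\<dots> = (\<Sum>b\<in>UNIV. n b x * lie_n_s g l l2 b x)
      - 2 * (\<Sum>b\<in>UNIV. n b x * (\<Sum>a\<in>UNIV. \<Sum>f\<in>UNIV. P a f x * U a b x * s f x))
      + (\<Sum>b\<in>UNIV. n b x * (\<Sum>c\<in>UNIV. \<Sum>f\<in>UNIV. P c f x * nablaU g l l2 Gam c b f x))
      - (\<Sum>b\<in>UNIV. n b x * pd b trU x) + trU x * (\<Sum>b\<in>UNIV. n b x * s b x)"
    by (simp add: Ric_n[OF x] ring_distribs sum.distrib sum_subtractf sum_distrib_left mult_ac)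
  finally show ?thesis
    by (simp add: sum_n_lie_n_s[OF x] sum_n_P_U_s[OF x] sum_n_P_nablaU[OF x] s_n)
qed

end

theorem lemma3p10:
  fixes S :: "(real^'n::finite) set"
    and g :: "'n \<Rightarrow> 'n \<Rightarrow> real^'n \<Rightarrow> real"
    and l :: "'n \<Rightarrow> real^'n \<Rightarrow> real"
    and l2 :: "real^'n \<Rightarrow> real"
    and Gam :: "'n \<Rightarrow> 'n \<Rightarrow> 'n \<Rightarrow> real^'n \<Rightarrow> real"
    and x :: "real^'n"
  assumes "null_data S g l l2"
    and "ring_connection S g l l2 Gam"
    and "x \<in> S"
  shows "(\<forall>b. (\<Sum>a\<in>UNIV. Ric Gam a b x * nv g l l2 a x)
            = lie_n_s g l l2 b x
              - 2 * (\<Sum>a\<in>UNIV. \<Sum>f\<in>UNIV. Pm g l l2 a f x * Uf g l l2 a b x * sv g l l2 f x)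
              + (\<Sum>c\<in>UNIV. \<Sum>f\<in>UNIV. Pm g l l2 c f x * nablaU g l l2 Gam c b f x)
              - pd b (trPU g l l2) x + trPU g l l2 x * sv g l l2 b x)
    \<and> (\<forall>b. (\<Sum>a\<in>UNIV. (Ric Gam a b x + Ric Gam b a x) / 2 * nv g l l2 a x)
            = lie_n_s g l l2 b x / 2
              - 2 * (\<Sum>a\<in>UNIV. \<Sum>f\<in>UNIV. Pm g l l2 a f x * Uf g l l2 a b x * sv g l l2 f x)
              + (\<Sum>c\<in>UNIV. \<Sum>f\<in>UNIV. Pm g l l2 c f x * nablaU g l l2 Gam c b f x)
              - pd b (trPU g l l2) x + trPU g l l2 x * sv g l l2 b x)
    \<and> ((\<Sum>a\<in>UNIV. \<Sum>b\<in>UNIV. Ric Gam a b x * nv g l l2 a x * nv g l l2 b x)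
            = - (\<Sum>a\<in>UNIV. \<Sum>b\<in>UNIV. \<Sum>c\<in>UNIV. \<Sum>d\<in>UNIV.
                   Pm g l l2 a b x * Pm g l l2 c d x * Uf g l l2 a c x * Uf g l l2 b d x)
              - (\<Sum>a\<in>UNIV. nv g l l2 a x * pd a (trPU g l l2) x))"
proof -
  interpret null_hypersurface S Gam g l l2
    using assms(1,2)
    by unfold_locales (auto simp: null_data_def metric_hypersurface_data_def ring_connection_def)
  show ?thesis
    using Ric_n[OF assms(3)] Ric_sym_n[OF assms(3)] Ric_n_n[OF assms(3)] by blast
qed

end
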